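(* Let $q\in\mathbb{C}\setminus\{0\}$, $n\in\mathbb{N}$, $r\in(0,+\infty]$. (i) There exists a surjective continuous homomorphism $\pi:\mathcal{F}(\mathbb{B}_r^n)\to\mathcal{O}_q(\mathbb{B}_r^n)$ with $\zeta_i\mapsto x_i$ ($i=1,\dots,n$). (ii) $\operatorname{Ker}\pi$ equals the closed two-sided ideal of $\mathcal{F}(\mathbb{B}_r^n)$ generated by $\zeta_i\zeta_j-q\zeta_j\zeta_i$ ($1\le i<j\le n$). (iii) $\operatorname{Ker}\pi$ is a complemented subspace of $\mathcal{F}(\mathbb{B}_r^n)$. (iv) Under the identification $\mathcal{O}_q(\mathbb{B}_r^n)\cong\mathcal{F}(\mathbb{B}_r^n)/\operatorname{Ker}\pi$, for each $\rho\in(0,r)$ the norm $\|\cdot\|_{\mathbb{B},\rho}$ equals the quotient norm of $\|\cdot\|^\circ_\rho$.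
   Context: $W_n$: finite words $\alpha=(\alpha_1,\dots,\alpha_d)$ over $\{1,\dots,n\}$, $|\alpha|=d$; $p(\alpha)=(p_1(\alpha),\dots,p_n(\alpha))\in\mathbb{Z}_+^n$ with $p_i(\alpha)=\#\{j:\alpha_j=i\}$. $\mathcal{F}(\mathbb{B}_r^n)$ is the algebra of series $f=\sum_{\alpha\in W_n}c_\alpha\zeta_\alpha$ with $\|f\|^\bullet_\rho=\sum_{d\ge0}(\sum_{|\alpha|=d}|c_\alpha|^2)^{1/2}\rho^d<\infty$ for all $\rho\in(0,r)$, multiplication by concatenation, topology given by $\|\cdot\|^\bullet_\rho$; equivalently by the norms $\|f\|^\circ_\rho=\sum_{k\in\mathbb{Z}_+^n}(\sum_{\alpha\in p^{-1}(k)}|c_\alpha|^2)^{1/2}\rho^{|k|}$. $\mathcal{O}_q^{\mathrm{reg}}(\mathbb{C}^n)$: algebra generated by $x_1,\dots,x_n$ with $x_ix_j=qx_jx_i$ ($i<j$), basis $x^k$. $u_q(k)=|q|^{\sum_{i<j}k_ik_j}$, $[m]_t=1+\dots+t^{m-1}$, $[m]_t!=[1]_t\cdots[m]_t$, $[0]_t!=1$, $[k]_t!=\prod[k_i]_t!$, $|k|=\sum k_i$; $\|\sum c_kx^k\|_{\mathbb{B},\rho}=\sum|c_k|([k]_{|q|^2}!/[|k|]_{|q|^2}!)^{1/2}u_q(k)\rho^{|k|}$; $\mathcal{O}_q(\mathbb{B}_r^n)$ is the completion of $\mathcal{O}_q^{\mathrm{reg}}(\mathbb{C}^n)$ with respect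 to these norms, $\rho\in(0,r)$. *)

theory Defs
  imports "HOL-Analysis.Analysis"
begin

text \<open>Words over {1..n} are lists; an element of F(B_r^n) is its coefficient
 function c : words -> complex (the series sum c_alpha zeta_alpha).\<close>

definition words :: "nat \<Rightarrow> nat list set" where
  "words n = {\<alpha>. set \<alpha> \<subseteq> {1..n}}"

definition wblock :: "nat \<Rightarrow> (nat list \<Rightarrow> complex) \<Rightarrow> nat \<Rightarrow> real" where
  "wblock n c d = sqrt (\<Sum>\<alpha>\<in>{\<alpha>\<in>words n. length \<alpha> = d}. (cmod (c \<alpha>))^2)"

definition normF_bullet :: "nat \<Rightarrow> (nat list \<Rightarrow> complex) \<Rightarrow> real \<Rightarrow> real" where
  "normF_bullet n c \<rho> = (\<Sum>\<^sub>\<infinity>d\<in>(UNIV::nat set). wblock n c d * \<rho> ^ d)"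

definition Fspace :: "nat \<Rightarrow> ereal \<Rightarrow> (nat list \<Rightarrow> complex) set" where
  "Fspace n r = {c. (\<forall>\<alpha>. \<alpha> \<notin> words n \<longrightarrow> c \<alpha> = 0) \<and>
      (\<forall>\<rho>. 0 < \<rho> \<and> ereal \<rho> < r \<longrightarrow> (\<lambda>d. wblock n c d * \<rho> ^ d) summable_on (UNIV::nat set))}"

text \<open>Multi-indices k in Z_+^n are functions nat => nat supported in {1..n}.\<close>

definition mindex :: "nat \<Rightarrow> (nat \<Rightarrow> nat) set" where
  "mindex n = {k. \<forall>i. i \<notin> {1..n} \<longrightarrow> k i = 0}"

definition mabs :: "nat \<Rightarrow> (nat \<Rightarrow> nat) \<Rightarrow> nat" where
  "mabs n k = (\<Sum>i\<in>{1..n}. k i)"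

definition pvec :: "nat list \<Rightarrow> nat \<Rightarrow> nat" where
  "pvec \<alpha> = (\<lambda>i. count_list \<alpha> i)"

definition normF_circ :: "nat \<Rightarrow> (nat list \<Rightarrow> complex) \<Rightarrow> real \<Rightarrow> real" where
  "normF_circ n c \<rho> = (\<Sum>\<^sub>\<infinity>k\<in>mindex n.
      sqrt (\<Sum>\<alpha>\<in>{\<alpha>\<in>words n. pvec \<alpha> = k}. (cmod (c \<alpha>))^2) * \<rho> ^ (mabs n k))"

definition Fmult :: "(nat list \<Rightarrow> complex) \<Rightarrow> (nat list \<Rightarrow> complex) \<Rightarrow> nat list \<Rightarrow> complex" where
  "Fmult f g w = (\<Sum>j\<le>length w. f (take j w) * g (drop j w))"

definition Fone :: "nat list \<Rightarrow> complex" where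
  "Fone w = (if w = [] then 1 else 0)"

definition zeta :: "nat \<Rightarrow> nat list \<Rightarrow> complex" where
  "zeta i w = (if w = [i] then 1 else 0)"

definition qint :: "real \<Rightarrow> nat \<Rightarrow> real" where
  "qint t m = (\<Sum>j<m. t ^ j)"

definition qfact :: "real \<Rightarrow> nat \<Rightarrow> real" where
  "qfact t m = (\<Prod>j\<in>{1..m}. qint t j)"

definition qfact_multi :: "nat \<Rightarrow> real \<Rightarrow> (nat \<Rightarrow> nat) \<Rightarrow> real" where
  "qfact_multi n t k = (\<Prod>i\<in>{1..n}. qfact t (k i))"

definition uq :: "nat \<Rightarrow> complex \<Rightarrow> (nat \<Rightarrow> nat) \<Rightarrow> real" where
  "uq n q k = cmod q ^ (\<Sum>i\<in>{1..n}. \<Sum>j\<in>{i<..n}. k i * k j)"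

definition Bterm :: "nat \<Rightarrow> complex \<Rightarrow> (nat \<Rightarrow> nat) \<Rightarrow> real" where
  "Bterm n q k = sqrt (qfact_multi n ((cmod q)^2) k / qfact ((cmod q)^2) (mabs n k)) * uq n q k"

definition normB :: "nat \<Rightarrow> complex \<Rightarrow> ((nat \<Rightarrow> nat) \<Rightarrow> complex) \<Rightarrow> real \<Rightarrow> real" where
  "normB n q c \<rho> = (\<Sum>\<^sub>\<infinity>k\<in>mindex n. cmod (c k) * Bterm n q k * \<rho> ^ (mabs n k))"

text \<open>The completion of O_q^reg(C^n) w.r.t. the norms normB, realised as the space of
 coefficient families (c_k) with all norms finite.\<close>

definition Oq :: "nat \<Rightarrow> complex \<Rightarrow> ereal \<Rightarrow> ((nat \<Rightarrow> nat) \<Rightarrow> complex) set" where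
  "Oq n q r = {c. (\<forall>k. k \<notin> mindex n \<longrightarrow> c k = 0) \<and>
      (\<forall>\<rho>. 0 < \<rho> \<and> ereal \<rho> < r \<longrightarrow>
          (\<lambda>k. cmod (c k) * Bterm n q k * \<rho> ^ (mabs n k)) summable_on mindex n)}"

text \<open>Product: x^k x^l = q^(- sum_{i>j} k_i l_j) x^(k+l).\<close>

definition Oqmult :: "nat \<Rightarrow> complex \<Rightarrow> ((nat \<Rightarrow> nat) \<Rightarrow> complex) \<Rightarrow> ((nat \<Rightarrow> nat) \<Rightarrow> complex)
     \<Rightarrow> (nat \<Rightarrow> nat) \<Rightarrow> complex" where
  "Oqmult n q a b m = (\<Sum>k\<in>{k. \<forall>i. k i \<le> m i}.
      (inverse q) ^ (\<Sum>i\<in>{1..n}. \<Sum>j\<in>{1..<i}. k i * (m j - k j)) * a k * b (\<lambda>i. m i - k i))"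

definition Oone :: "(nat \<Rightarrow> nat) \<Rightarrow> complex" where
  "Oone k = (if k = (\<lambda>_. 0) then 1 else 0)"

definition xgen :: "nat \<Rightarrow> (nat \<Rightarrow> nat) \<Rightarrow> complex" where
  "xgen i k = (if k = (\<lambda>j. if j = i then 1 else 0) then 1 else 0)"

definition lin_on :: "('a \<Rightarrow> complex) set \<Rightarrow> (('a \<Rightarrow> complex) \<Rightarrow> ('b \<Rightarrow> complex)) \<Rightarrow> bool" where
  "lin_on S T \<longleftrightarrow> (\<forall>f\<in>S. \<forall>g\<in>S. T (\<lambda>x. f x + g x) = (\<lambda>y. T f y + T g y)) \<and>
                   (\<forall>f\<in>S. \<forall>c. T (\<lambda>x. c * f x) = (\<lambda>y. c * T f y))"

definition cont_FO :: "nat \<Rightarrow> complex \<Rightarrow> ereal \<Rightarrow> ((nat list \<Rightarrow> complex) \<Rightarrow> ((nat \<Rightarrow> nat) \<Rightarrow> complex)) \<Rightarrow> bool" where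
  "cont_FO n q r T \<longleftrightarrow> (\<forall>\<rho>. 0 < \<rho> \<and> ereal \<rho> < r \<longrightarrow>
     (\<exists>\<rho>' C. 0 < \<rho>' \<and> ereal \<rho>' < r \<and> (\<forall>f\<in>Fspace n r. normB n q (T f) \<rho> \<le> C * normF_bullet n f \<rho>')))"

definition cont_FF :: "nat \<Rightarrow> ereal \<Rightarrow> ((nat list \<Rightarrow> complex) \<Rightarrow> (nat list \<Rightarrow> complex)) \<Rightarrow> bool" where
  "cont_FF n r T \<longleftrightarrow> (\<forall>\<rho>. 0 < \<rho> \<and> ereal \<rho> < r \<longrightarrow>
     (\<exists>\<rho>' C. 0 < \<rho>' \<and> ereal \<rho>' < r \<and> (\<forall>f\<in>Fspace n r. normF_bullet n (T f) \<rho> \<le> C * normF_bullet n f \<rho>')))"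

definition two_sided_ideal :: "nat \<Rightarrow> ereal \<Rightarrow> (nat list \<Rightarrow> complex) set \<Rightarrow> bool" where
  "two_sided_ideal n r I \<longleftrightarrow> I \<subseteq> Fspace n r \<and> (\<lambda>_. 0) \<in> I \<and>
     (\<forall>f\<in>I. \<forall>g\<in>I. (\<lambda>w. f w + g w) \<in> I) \<and> (\<forall>f\<in>I. \<forall>c. (\<lambda>w. c * f w) \<in> I) \<and>
     (\<forall>a\<in>Fspace n r. \<forall>f\<in>I. Fmult a f \<in> I \<and> Fmult f a \<in> I)"

definition ideal_gen :: "nat \<Rightarrow> ereal \<Rightarrow> (nat list \<Rightarrow> complex) set \<Rightarrow> (nat list \<Rightarrow> complex) set" where
  "ideal_gen n r G = {f \<in> Fspace n r. \<forall>I. two_sided_ideal n r I \<and> G \<subseteq> I \<longrightarrow> f \<in> I}"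

text \<open>Closure in the topology of F(B_r^n) (seminorms normF_bullet, increasing in rho).\<close>

definition Fclosure :: "nat \<Rightarrow> ereal \<Rightarrow> (nat list \<Rightarrow> complex) set \<Rightarrow> (nat list \<Rightarrow> complex) set" where
  "Fclosure n r S = {f \<in> Fspace n r. \<forall>\<rho>. 0 < \<rho> \<and> ereal \<rho> < r \<longrightarrow>
      (\<forall>\<epsilon>>0. \<exists>g\<in>S. normF_bullet n (\<lambda>w. f w - g w) \<rho> < \<epsilon>)}"

definition qcomm :: "complex \<Rightarrow> nat \<Rightarrow> nat \<Rightarrow> nat list \<Rightarrow> complex" where
  "qcomm q i j = (\<lambda>w. Fmult (zeta i) (zeta j) w - q * Fmult (zeta j) (zeta i) w)"

end

theory Submission
  imports Defs
begin

text \<open>The map \<open>\<pi>\<close> sends a word \<open>\<alpha>\<close> to \<open>q^(-inv \<alpha>) x^p(\<alpha>)\<close>, where \<open>inv \<alpha>\<close>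
  counts the inversions of \<open>\<alpha>\<close>; it is multiplicative because
  \<open>inv (\<beta>\<gamma>) = inv \<beta> + inv \<gamma> + #{(i,j). \<beta>_i > \<gamma>_j}\<close>. Bubble sort shows
  \<open>\<alpha> \<equiv> q^(-inv \<alpha>) sort \<alpha>\<close> modulo the ideal generated by the q-commutators, so every
  finitely supported element of \<open>Ker \<pi>\<close> lies in that ideal, and truncations approximate
  every element of \<open>Ker \<pi>\<close>.

  On the words with letter count \<open>k\<close>, \<open>\<pi>\<close> is the functional \<open>f \<mapsto> \<Sum> f_\<alpha> q^(-inv \<alpha>)\<close>;
  by the q-multinomial theorem its squared \<open>\<ell>\<^sup>2\<close>-norm \<open>\<Sum> |q|^(-2 inv \<alpha>)\<close> is the
  inverse square of the weight of \<open>x^k\<close> in \<open>\<parallel>\<cdot>\<parallel>_\<B>,\<rho>\<close>. So Cauchy-Schwarz gives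
  \<open>\<parallel>\<pi> f\<parallel>_\<B>,\<rho> \<le> \<parallel>f\<parallel>\<degree>_\<rho>\<close>, with equality for the minimal-norm lift of each \<open>a\<close>. This is
  the quotient norm, and \<open>f - lift (\<pi> f)\<close> is a continuous projection onto \<open>Ker \<pi>\<close>.
  Continuity comes from \<open>\<parallel>\<cdot>\<parallel>\<degree>_\<rho> \<le> C \<parallel>\<cdot>\<parallel>\<^sup>\<bullet>_\<rho>'\<close> for \<open>\<rho> < \<rho>'\<close>, as there
  are at most \<open>(d+1)^n\<close> multi-indices of degree \<open>d\<close>.\<close>

section \<open>Words, letter counts and inversions\<close>

lemma words_Nil [simp]: "[] \<in> words n"
  by (simp add: words_def)

lemma words_Cons [simp]: "x # xs \<in> words n \<longleftrightarrow> x \<in> {1..n} \<and> xs \<in> words n"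
  by (auto simp: words_def)

lemma words_append [simp]: "xs @ ys \<in> words n \<longleftrightarrow> xs \<in> words n \<and> ys \<in> words n"
  by (auto simp: words_def)

lemma words_take [simp]: "\<alpha> \<in> words n \<Longrightarrow> take j \<alpha> \<in> words n"
  by (auto simp: words_def dest: in_set_takeD)

lemma words_drop [simp]: "\<alpha> \<in> words n \<Longrightarrow> drop j \<alpha> \<in> words n"
  by (auto simp: words_def dest: in_set_dropD)

lemma finite_words_length_eq: "finite {\<alpha> \<in> words n. length \<alpha> = d}"
  using finite_lists_length_eq[of "{1..n}" d] by (simp add: words_def)

lemma finite_words_length_le: "finite {\<alpha> \<in> words n. length \<alpha> \<le> d}"
  using finite_lists_length_le[of "{1..n}" d] by (simp add: words_def)

lemma pvec_append: "pvec (xs @ ys) = (\<lambda>i. pvec xs i + pvec ys i)"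
  by (simp add: pvec_def)

lemma pvec_Cons: "pvec (x # xs) = (\<lambda>i. (if x = i then 1 else 0) + pvec xs i)"
  by (auto simp: pvec_def)

lemma pvec_in_mindex: "\<alpha> \<in> words n \<Longrightarrow> pvec \<alpha> \<in> mindex n"
  unfolding pvec_def mindex_def words_def by (auto simp: count_list_0_iff)

lemma mabs_pvec: "\<alpha> \<in> words n \<Longrightarrow> mabs n (pvec \<alpha>) = length \<alpha>"
  unfolding mabs_def pvec_def words_def by (rule sum_count_set) auto

lemma pvec_eq_iff_mset_eq: "pvec \<alpha> = pvec \<beta> \<longleftrightarrow> mset \<alpha> = mset \<beta>"
  by (auto simp: pvec_def fun_eq_iff multiset_eq_iff count_mset)

definition count_class :: "nat \<Rightarrow> (nat \<Rightarrow> nat) \<Rightarrow> nat list set" where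
  "count_class n k = {\<alpha> \<in> words n. pvec \<alpha> = k}"

lemma count_class_subset: "count_class n k \<subseteq> {\<alpha> \<in> words n. length \<alpha> = mabs n k}"
  using mabs_pvec by (auto simp: count_class_def)

lemma finite_count_class [simp]: "finite (count_class n k)"
  using count_class_subset finite_words_length_eq finite_subset by blast

lemma count_class_eq_empty: "k \<notin> mindex n \<Longrightarrow> count_class n k = {}"
  using pvec_in_mindex by (auto simp: count_class_def)

lemma length_filter_less_eq_sum_pvec:
  assumes "\<gamma> \<in> words n"
  shows "length (filter (\<lambda>y. y < x) \<gamma>) = (\<Sum>j\<in>{1..<x}. pvec \<gamma> j)"
  using assms
proof (induction \<gamma>)
  case Nil
  then show ?case by (simp add: pvec_def)
next
  case (Cons y ys)
  have "(\<Sum>j\<in>{1..<x}. pvec (y # ys) j) = (\<Sum>j\<in>{1..<x}. (if y = j then 1 else 0)) + (\<Sum>j\<in>{1..<x}. pvec ys j)"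
    by (simp add: pvec_Cons sum.distrib)
  also have "(\<Sum>j\<in>{1..<x}. (if y = j then 1 else 0)::nat) = (if y \<in> {1..<x} then 1 else 0)"
    by (simp add: sum.delta)
  finally show ?case using Cons by auto
qed

fun inversions :: "nat list \<Rightarrow> nat" where
  "inversions [] = 0"
| "inversions (x # xs) = length (filter (\<lambda>y. y < x) xs) + inversions xs"

definition cross_inversions :: "nat list \<Rightarrow> nat list \<Rightarrow> nat" where
  "cross_inversions \<beta> \<gamma> = (\<Sum>x\<leftarrow>\<beta>. length (filter (\<lambda>y. y < x) \<gamma>))"

lemma inversions_append: "inversions (\<beta> @ \<gamma>) = inversions \<beta> + inversions \<gamma> + cross_inversions \<beta> \<gamma>"
  by (induction \<beta>) (auto simp: cross_inversions_def)

text \<open>The exponent \<open>e\<close> in \<open>x^k x^l = q^(-e) x^(k+l)\<close>.\<close>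

definition cross_exp :: "nat \<Rightarrow> (nat \<Rightarrow> nat) \<Rightarrow> (nat \<Rightarrow> nat) \<Rightarrow> nat" where
  "cross_exp n k l = (\<Sum>i\<in>{1..n}. \<Sum>j\<in>{1..<i}. k i * l j)"

lemma cross_inversions_eq_cross_exp:
  assumes "\<beta> \<in> words n" "\<gamma> \<in> words n"
  shows "cross_inversions \<beta> \<gamma> = cross_exp n (pvec \<beta>) (pvec \<gamma>)"
  using assms(1)
proof (induction \<beta>)
  case Nil
  then show ?case by (simp add: cross_inversions_def cross_exp_def pvec_def)
next
  case (Cons x xs)
  have x: "x \<in> {1..n}" using Cons.prems by simp
  have "cross_exp n (pvec (x # xs)) (pvec \<gamma>)
      = (\<Sum>i\<in>{1..n}. \<Sum>j\<in>{1..<i}. (if x = i then 1 else 0) * pvec \<gamma> j) + cross_exp n (pvec xs) (pvec \<gamma>)"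
    unfolding cross_exp_def pvec_Cons by (simp add: algebra_simps sum.distrib)
  also have "(\<Sum>i\<in>{1..n}. \<Sum>j\<in>{1..<i}. (if x = i then 1 else 0) * pvec \<gamma> j)
      = (\<Sum>i\<in>{1..n}. if x = i then (\<Sum>j\<in>{1..<i}. pvec \<gamma> j) else 0)"
    by (intro sum.cong refl) auto
  also have "\<dots> = length (filter (\<lambda>y. y < x) \<gamma>)"
    using x length_filter_less_eq_sum_pvec[OF assms(2)] by (simp add: sum.delta)
  finally show ?case using Cons by (simp add: cross_inversions_def)
qed

definition qweight :: "complex \<Rightarrow> nat list \<Rightarrow> complex" where
  "qweight q \<alpha> = inverse q ^ inversions \<alpha>"

lemma qweight_append:
  assumes "\<beta> \<in> words n" "\<gamma> \<in> words n"
  shows "qweight q (\<beta> @ \<gamma>) = qweight q \<beta> * qweight q \<gamma> * inverse q ^ cross_exp n (pvec \<beta>) (pvec \<gamma>)"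
  by (simp add: qweight_def inversions_append cross_inversions_eq_cross_exp[OF assms] power_add)

section \<open>The algebra \<open>\<F>(\<B>\<^sub>r\<^sup>n)\<close>\<close>

definition wbasis :: "nat list \<Rightarrow> nat list \<Rightarrow> complex" where
  "wbasis u = (\<lambda>w. if w = u then 1 else 0)"

lemma Fmult_wbasis: "Fmult (wbasis u) (wbasis v) = wbasis (u @ v)"
proof
  fix w
  have "Fmult (wbasis u) (wbasis v) w = (\<Sum>j\<le>length w. if w = u @ v \<and> j = length u then 1 else 0)"
    unfolding Fmult_def wbasis_def
  proof (intro sum.cong refl)
    fix j assume "j \<in> {..length w}"
    then have "take j w = u \<and> drop j w = v \<longleftrightarrow> w = u @ v \<and> j = length u"
      by (metis append_eq_conv_conj append_take_drop_id length_take min.absorb2 atMost_iff)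
    then show "(if take j w = u then 1 else 0) * (if drop j w = v then 1 else 0)
        = (if w = u @ v \<and> j = length u then 1 else (0::complex))"
      by auto
  qed
  also have "\<dots> = wbasis (u @ v) w"
    by (cases "w = u @ v") (simp_all add: wbasis_def)
  finally show "Fmult (wbasis u) (wbasis v) w = wbasis (u @ v) w" .
qed

lemma Fmult_diff_right: "Fmult f (\<lambda>w. g w - c * h w) = (\<lambda>w. Fmult f g w - c * Fmult f h w)"
  unfolding Fmult_def by (auto simp: algebra_simps sum_subtractf sum_distrib_left)

lemma Fmult_diff_left: "Fmult (\<lambda>w. g w - c * h w) f = (\<lambda>w. Fmult g f w - c * Fmult h f w)"
  unfolding Fmult_def by (auto simp: algebra_simps sum_subtractf sum_distrib_left)

lemma zeta_eq_wbasis: "zeta i = wbasis [i]"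
  by (auto simp: zeta_def wbasis_def)

lemma Fone_eq_wbasis: "Fone = wbasis []"
  by (auto simp: Fone_def wbasis_def)

lemma qcomm_eq_wbasis: "qcomm q i j = (\<lambda>w. wbasis [i,j] w - q * wbasis [j,i] w)"
  unfolding qcomm_def zeta_eq_wbasis Fmult_wbasis by simp

lemma wblock_nonneg: "wblock n f d \<ge> 0"
  by (simp add: wblock_def sum_nonneg)

lemma Fspace_vanishes: "f \<in> Fspace n r \<Longrightarrow> \<alpha> \<notin> words n \<Longrightarrow> f \<alpha> = 0"
  by (simp add: Fspace_def)

lemma Fspace_summable:
  assumes "f \<in> Fspace n r" "0 < \<rho>" "ereal \<rho> < r"
  shows "summable (\<lambda>d. wblock n f d * \<rho> ^ d)"
  using assms summable_on_UNIV_nonneg_real_iff[of "\<lambda>d. wblock n f d * \<rho> ^ d"]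
  by (auto simp: Fspace_def wblock_nonneg)

lemma normF_bullet_eq_suminf:
  assumes "f \<in> Fspace n r" "0 < \<rho>" "ereal \<rho> < r"
  shows "normF_bullet n f \<rho> = (\<Sum>d. wblock n f d * \<rho> ^ d)"
  unfolding normF_bullet_def
  using assms by (intro infsumI sums_nonneg_imp_has_sum summable_sums Fspace_summable)
    (auto simp: wblock_nonneg)

lemma Fspace_by_summable:
  assumes "\<And>\<alpha>. \<alpha> \<notin> words n \<Longrightarrow> f \<alpha> = 0"
    and "\<And>\<rho>. 0 < \<rho> \<Longrightarrow> ereal \<rho> < r \<Longrightarrow> summable (\<lambda>d. wblock n f d * \<rho> ^ d)"
  shows "f \<in> Fspace n r"
  using assms by (auto simp: Fspace_def wblock_nonneg intro!: summable_nonneg_imp_summable_on)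

lemma Fspace_finite_support:
  assumes "\<And>\<alpha>. \<alpha> \<notin> words n \<Longrightarrow> f \<alpha> = 0" "\<And>\<alpha>. length \<alpha> > N \<Longrightarrow> f \<alpha> = 0"
  shows "f \<in> Fspace n r"
proof (rule Fspace_by_summable)
  show "summable (\<lambda>d. wblock n f d * \<rho> ^ d)" for \<rho> :: real
    by (rule summable_finite[of "{..N}"]) (auto simp: wblock_def assms(2))
qed (use assms(1) in auto)

lemma wbasis_Fspace: "u \<in> words n \<Longrightarrow> wbasis u \<in> Fspace n r"
  by (rule Fspace_finite_support[of _ _ "length u"]) (auto simp: wbasis_def)

lemma zero_Fspace: "(\<lambda>_. 0) \<in> Fspace n r"
  by (rule Fspace_finite_support[of _ _ 0]) auto

lemma wblock_eq_L2_set: "wblock n f d = L2_set (\<lambda>\<alpha>. cmod (f \<alpha>)) {\<alpha> \<in> words n. length \<alpha> = d}"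
  by (simp add: wblock_def L2_set_def)

lemma wblock_add: "wblock n (\<lambda>w. f w + g w) d \<le> wblock n f d + wblock n g d"
proof -
  have "wblock n (\<lambda>w. f w + g w) d
      \<le> L2_set (\<lambda>\<alpha>. cmod (f \<alpha>) + cmod (g \<alpha>)) {\<alpha> \<in> words n. length \<alpha> = d}"
    unfolding wblock_eq_L2_set by (rule L2_set_mono) (auto simp: norm_triangle_ineq)
  also have "\<dots> \<le> wblock n f d + wblock n g d"
    unfolding wblock_eq_L2_set by (rule L2_set_triangle_ineq)
  finally show ?thesis .
qed

lemma wblock_smult: "wblock n (\<lambda>w. c * f w) d = cmod c * wblock n f d"
  unfolding wblock_eq_L2_set by (simp add: L2_set_right_distrib norm_mult)

lemma wblock_diff: "wblock n (\<lambda>w. f w - g w) d \<le> wblock n f d + wblock n g d"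
  using wblock_add[of n f "\<lambda>w. (-1) * g w" d] wblock_smult[of n "-1" g d] by simp

lemma L2_set_sum_le:
  "finite J \<Longrightarrow> L2_set (\<lambda>x. \<Sum>j\<in>J. h j x) A \<le> (\<Sum>j\<in>J. L2_set (h j) A)"
proof (induction J rule: finite_induct)
  case (insert j J)
  have "L2_set (\<lambda>x. h j x + (\<Sum>j\<in>J. h j x)) A \<le> L2_set (h j) A + L2_set (\<lambda>x. \<Sum>j\<in>J. h j x) A"
    by (rule L2_set_triangle_ineq)
  then show ?case using insert by simp
qed (simp add: L2_set_def)

lemma bij_betw_take_drop_words:
  assumes "j \<le> d"
  shows "bij_betw (\<lambda>\<alpha>. (take j \<alpha>, drop j \<alpha>)) {\<alpha> \<in> words n. length \<alpha> = d}
           ({\<beta> \<in> words n. length \<beta> = j} \<times> {\<gamma> \<in> words n. length \<gamma> = d - j})"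
proof (rule bij_betwI[where g = "\<lambda>(\<beta>,\<gamma>). \<beta> @ \<gamma>"])
  show "(\<lambda>\<alpha>. (take j \<alpha>, drop j \<alpha>)) \<in> {\<alpha> \<in> words n. length \<alpha> = d}
      \<rightarrow> {\<beta> \<in> words n. length \<beta> = j} \<times> {\<gamma> \<in> words n. length \<gamma> = d - j}"
    using assms by auto
qed (use assms in auto)

lemma L2_set_take_drop:
  assumes "j \<le> d"
  shows "L2_set (\<lambda>\<alpha>. cmod (f (take j \<alpha>)) * cmod (g (drop j \<alpha>))) {\<alpha> \<in> words n. length \<alpha> = d}
       = wblock n f j * wblock n g (d - j)"
proof -
  have "(\<Sum>\<alpha>\<in>{\<alpha> \<in> words n. length \<alpha> = d}. (cmod (f (take j \<alpha>)) * cmod (g (drop j \<alpha>)))\<^sup>2)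
      = (\<Sum>(\<beta>,\<gamma>)\<in>{\<beta> \<in> words n. length \<beta> = j} \<times> {\<gamma> \<in> words n. length \<gamma> = d - j}.
           (cmod (f \<beta>))\<^sup>2 * (cmod (g \<gamma>))\<^sup>2)"
    by (subst sum.reindex_bij_betw[OF bij_betw_take_drop_words[OF assms], symmetric])
       (simp add: power_mult_distrib)
  also have "\<dots> = (\<Sum>\<beta>\<in>{\<beta> \<in> words n. length \<beta> = j}. (cmod (f \<beta>))\<^sup>2)
                 * (\<Sum>\<gamma>\<in>{\<gamma> \<in> words n. length \<gamma> = d - j}. (cmod (g \<gamma>))\<^sup>2)"
    by (simp add: sum_product sum.cartesian_product)
  finally show ?thesis
    by (simp add: L2_set_def wblock_def real_sqrt_mult)
qed

lemma wblock_Fmult: "wblock n (Fmult f g) d \<le> (\<Sum>j\<le>d. wblock n f j * wblock n g (d - j))"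
proof -
  have "wblock n (Fmult f g) d
      \<le> L2_set (\<lambda>\<alpha>. \<Sum>j\<le>d. cmod (f (take j \<alpha>)) * cmod (g (drop j \<alpha>))) {\<alpha> \<in> words n. length \<alpha> = d}"
    unfolding wblock_eq_L2_set Fmult_def
    by (rule L2_set_mono) (auto intro!: order.trans[OF norm_sum] simp: norm_mult)
  also have "\<dots> \<le> (\<Sum>j\<le>d. L2_set (\<lambda>\<alpha>. cmod (f (take j \<alpha>)) * cmod (g (drop j \<alpha>))) {\<alpha> \<in> words n. length \<alpha> = d})"
    by (rule L2_set_sum_le) simp
  also have "\<dots> = (\<Sum>j\<le>d. wblock n f j * wblock n g (d - j))"
    by (simp add: L2_set_take_drop)
  finally show ?thesis .
qed

lemma Fspace_add:
  assumes f: "f \<in> Fspace n r" and g: "g \<in> Fspace n r"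
  shows "(\<lambda>w. f w + g w) \<in> Fspace n r"
proof (rule Fspace_by_summable)
  fix \<rho> :: real assume \<rho>: "0 < \<rho>" "ereal \<rho> < r"
  show "summable (\<lambda>d. wblock n (\<lambda>w. f w + g w) d * \<rho> ^ d)"
    by (rule summable_comparison_test'[OF summable_add[OF Fspace_summable[OF f \<rho>] Fspace_summable[OF g \<rho>]]])
      (use \<rho> wblock_add in \<open>auto simp: wblock_nonneg distrib_right[symmetric] intro!: mult_right_mono\<close>)
qed (use f g in \<open>simp add: Fspace_vanishes\<close>)

lemma Fspace_smult:
  assumes "f \<in> Fspace n r"
  shows "(\<lambda>w. c * f w) \<in> Fspace n r"
proof (rule Fspace_by_summable)
  fix \<rho> :: real assume "0 < \<rho>" "ereal \<rho> < r"
  from summable_mult[OF Fspace_summable[OF assms this], of "cmod c"]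
  show "summable (\<lambda>d. wblock n (\<lambda>w. c * f w) d * \<rho> ^ d)"
    by (simp add: wblock_smult mult.assoc)
qed (use assms in \<open>simp add: Fspace_vanishes\<close>)

lemma Fspace_diff:
  assumes "f \<in> Fspace n r" "g \<in> Fspace n r"
  shows "(\<lambda>w. f w - c * g w) \<in> Fspace n r"
  using Fspace_add[OF assms(1) Fspace_smult[OF assms(2), of "- c"]] by simp

lemma Fspace_Fmult:
  assumes f: "f \<in> Fspace n r" and g: "g \<in> Fspace n r"
  shows "Fmult f g \<in> Fspace n r"
proof (rule Fspace_by_summable)
  fix \<alpha> :: "nat list" assume \<alpha>: "\<alpha> \<notin> words n"
  have zero: "f (take j \<alpha>) * g (drop j \<alpha>) = 0" for j
  proof -
    have "take j \<alpha> \<notin> words n \<or> drop j \<alpha> \<notin> words n"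
      using \<alpha> words_append[of "take j \<alpha>" "drop j \<alpha>" n] by auto
    then show ?thesis using f g by (auto simp: Fspace_vanishes)
  qed
  show "Fmult f g \<alpha> = 0"
    unfolding Fmult_def by (rule sum.neutral) (use zero in blast)
next
  fix \<rho> :: real assume \<rho>: "0 < \<rho>" "ereal \<rho> < r"
  let ?a = "\<lambda>j. wblock n f j * \<rho> ^ j" and ?b = "\<lambda>j. wblock n g j * \<rho> ^ j"
  have cauchy: "summable (\<lambda>d. \<Sum>j\<le>d. ?a j * ?b (d - j))"
    using Fspace_summable[OF f \<rho>] Fspace_summable[OF g \<rho>] \<rho>
    by (intro summable_Cauchy_product) (simp_all add: wblock_nonneg)
  have bound: "wblock n (Fmult f g) d * \<rho> ^ d \<le> (\<Sum>j\<le>d. ?a j * ?b (d - j))" for d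
  proof -
    have "wblock n (Fmult f g) d * \<rho> ^ d \<le> (\<Sum>j\<le>d. wblock n f j * wblock n g (d - j)) * \<rho> ^ d"
      using wblock_Fmult \<rho> by (intro mult_right_mono) auto
    also have "\<dots> = (\<Sum>j\<le>d. ?a j * ?b (d - j))"
      unfolding sum_distrib_right by (intro sum.cong refl) (simp add: power_add[symmetric] mult_ac)
    finally show ?thesis .
  qed
  show "summable (\<lambda>d. wblock n (Fmult f g) d * \<rho> ^ d)"
    by (rule summable_comparison_test'[OF cauchy]) (use bound \<rho> in \<open>simp add: wblock_nonneg\<close>)
qed

section \<open>Multi-indices of bounded degree\<close>

definition mindex_deg :: "nat \<Rightarrow> nat \<Rightarrow> (nat \<Rightarrow> nat) set" where
  "mindex_deg n d = {k \<in> mindex n. mabs n k = d}"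

definition mindex_le :: "nat \<Rightarrow> nat \<Rightarrow> (nat \<Rightarrow> nat) set" where
  "mindex_le n D = {k \<in> mindex n. mabs n k \<le> D}"

lemma le_mabs: "x \<in> {1..n} \<Longrightarrow> k x \<le> mabs n k"
  unfolding mabs_def by (intro member_le_sum) auto

lemma mindex_le_subset:
  "mindex_le n D \<subseteq> {k. \<forall>x. (x \<in> {1..n} \<longrightarrow> k x \<in> {0..D}) \<and> (x \<notin> {1..n} \<longrightarrow> k x = 0)}"
proof
  fix k assume k: "k \<in> mindex_le n D"
  have "k x \<le> D" if "x \<in> {1..n}" for x
    using le_mabs[OF that, of k] k by (simp add: mindex_le_def)
  then show "k \<in> {k. \<forall>x. (x \<in> {1..n} \<longrightarrow> k x \<in> {0..D}) \<and> (x \<notin> {1..n} \<longrightarrow> k x = 0)}"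
    using k by (simp add: mindex_le_def mindex_def)
qed

lemma finite_mindex_le: "finite (mindex_le n D)"
  using finite_set_of_finite_funs[of "{1..n}" "{0..D}" 0] mindex_le_subset
  by (rule finite_subset[rotated]) auto

lemma finite_mindex_deg: "finite (mindex_deg n d)"
  using finite_mindex_le[of n d] by (rule finite_subset[rotated]) (auto simp: mindex_deg_def mindex_le_def)

lemma card_mindex_deg_le: "card (mindex_deg n d) \<le> (d + 1) ^ n"
proof -
  have "inj_on (\<lambda>k. restrict k {1..n}) (mindex_deg n d)"
  proof (rule inj_onI)
    fix k l assume kl: "k \<in> mindex_deg n d" "l \<in> mindex_deg n d" "restrict k {1..n} = restrict l {1..n}"
    show "k = l"
    proof
      fix i show "k i = l i"
      proof (cases "i \<in> {1..n}")
        case True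
        then show ?thesis using fun_cong[OF kl(3), of i] by simp
      next
        case False
        then show ?thesis using kl(1,2) by (simp add: mindex_deg_def mindex_def)
      qed
    qed
  qed
  moreover have "(\<lambda>k. restrict k {1..n}) ` mindex_deg n d \<subseteq> PiE {1..n} (\<lambda>_. {0..d})"
    using mindex_le_subset[of n d] by (auto simp: mindex_deg_def mindex_le_def)
  ultimately have "card (mindex_deg n d) \<le> card (PiE {1..n} (\<lambda>_. {0..d}))"
    by (intro card_inj_on_le) (auto simp: finite_PiE)
  then show ?thesis by (simp add: card_PiE)
qed

lemma sum_mindex_le: "(\<Sum>k\<in>mindex_le n D. g k) = (\<Sum>d\<le>D. \<Sum>k\<in>mindex_deg n d. g k)"
proof -
  have "(\<Sum>k\<in>mindex_le n D. g k) = (\<Sum>d\<le>D. \<Sum>k\<in>{k\<in>mindex_le n D. mabs n k = d}. g k)"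
    by (rule sum.group[symmetric]) (use finite_mindex_le[of n D] in \<open>auto simp: mindex_le_def\<close>)
  also have "\<dots> = (\<Sum>d\<le>D. \<Sum>k\<in>mindex_deg n d. g k)"
    by (intro sum.cong refl arg_cong[where f = "sum g"]) (auto simp: mindex_le_def mindex_deg_def)
  finally show ?thesis .
qed

lemma subset_mindex_le: "finite F \<Longrightarrow> F \<subseteq> mindex n \<Longrightarrow> F \<subseteq> mindex_le n (\<Sum>k\<in>F. mabs n k)"
  by (auto simp: mindex_le_def intro: member_le_sum)

lemma finite_pointwise_le:
  assumes "m \<in> mindex n"
  shows "finite {k. \<forall>i. k i \<le> m i}"
proof (rule finite_subset[OF _ finite_mindex_le])
  show "{k. \<forall>i. k i \<le> m i} \<subseteq> mindex_le n (mabs n m)"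
  proof
    fix k assume "k \<in> {k. \<forall>i. k i \<le> m i}"
    then have le: "k i \<le> m i" for i by simp
    have "k i = 0" if "i \<notin> {1..n}" for i
      using le[of i] assms that by (simp add: mindex_def)
    moreover have "mabs n k \<le> mabs n m"
      unfolding mabs_def using le by (rule sum_mono)
    ultimately show "k \<in> mindex_le n (mabs n m)" by (simp add: mindex_le_def mindex_def)
  qed
qed

section \<open>The map \<open>\<pi>\<close> and its multiplicativity\<close>

definition piq :: "nat \<Rightarrow> complex \<Rightarrow> (nat list \<Rightarrow> complex) \<Rightarrow> (nat \<Rightarrow> nat) \<Rightarrow> complex" where
  "piq n q f = (\<lambda>k. \<Sum>\<alpha>\<in>count_class n k. f \<alpha> * qweight q \<alpha>)"

lemma piq_outside_mindex: "k \<notin> mindex n \<Longrightarrow> piq n q f k = 0"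
  by (simp add: piq_def count_class_eq_empty)

lemma piq_add: "piq n q (\<lambda>w. f w + g w) = (\<lambda>k. piq n q f k + piq n q g k)"
  by (auto simp: piq_def sum.distrib algebra_simps)

lemma piq_smult: "piq n q (\<lambda>w. c * f w) = (\<lambda>k. c * piq n q f k)"
  by (auto simp: piq_def sum_distrib_left algebra_simps)

lemma piq_diff: "piq n q (\<lambda>w. f w - c * g w) = (\<lambda>k. piq n q f k - c * piq n q g k)"
  by (auto simp: piq_def sum_subtractf sum_distrib_left algebra_simps)

lemma lin_on_piq: "lin_on S (piq n q)"
  unfolding lin_on_def by (simp add: piq_add piq_smult)

lemma piq_wbasis: "piq n q (wbasis u) = (\<lambda>k. if u \<in> words n \<and> pvec u = k then qweight q u else 0)"
proof
  fix k
  have "piq n q (wbasis u) k = (\<Sum>\<alpha>\<in>count_class n k. if \<alpha> = u then qweight q u else 0)"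
    unfolding piq_def wbasis_def by (intro sum.cong refl) auto
  also have "\<dots> = (if u \<in> count_class n k then qweight q u else 0)"
    by (simp add: sum.delta')
  finally show "piq n q (wbasis u) k = (if u \<in> words n \<and> pvec u = k then qweight q u else 0)"
    by (simp add: count_class_def)
qed

lemma piq_Fone: "piq n q Fone = Oone"
proof
  fix k
  have "pvec [] = k \<longleftrightarrow> k = (\<lambda>_. 0)" by (auto simp: pvec_def)
  then show "piq n q Fone k = Oone k" by (simp add: Fone_eq_wbasis piq_wbasis Oone_def qweight_def)
qed

lemma piq_zeta:
  assumes "i \<in> {1..n}"
  shows "piq n q (zeta i) = xgen i"
proof
  fix k
  have "pvec [i] = k \<longleftrightarrow> k = (\<lambda>j. if j = i then 1 else 0)" by (auto simp: pvec_def)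
  then show "piq n q (zeta i) k = xgen i k"
    using assms by (simp add: zeta_eq_wbasis piq_wbasis xgen_def qweight_def)
qed

lemma piq_qcomm:
  assumes "1 \<le> i" "i < j" "j \<le> n" "q \<noteq> 0"
  shows "piq n q (qcomm q i j) = (\<lambda>_. 0)"
proof -
  have "pvec [j,i] = pvec [i,j]" by (auto simp: pvec_def)
  moreover have "qweight q [i,j] = 1" "qweight q [j,i] = inverse q"
    using assms by (simp_all add: qweight_def)
  ultimately show ?thesis
    using assms unfolding qcomm_eq_wbasis piq_diff piq_wbasis by (auto simp: fun_eq_iff)
qed

definition count_pairs :: "nat \<Rightarrow> (nat \<Rightarrow> nat) \<Rightarrow> (nat list \<times> nat list) set" where
  "count_pairs n m = {(\<beta>,\<gamma>). \<beta> \<in> words n \<and> \<gamma> \<in> words n \<and> (\<lambda>i. pvec \<beta> i + pvec \<gamma> i) = m}"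

lemma bij_betw_split_count_class:
  "bij_betw (\<lambda>(\<alpha>,j). (take j \<alpha>, drop j \<alpha>)) (Sigma (count_class n m) (\<lambda>\<alpha>. {..length \<alpha>})) (count_pairs n m)"
proof (rule bij_betwI[where g = "\<lambda>(\<beta>,\<gamma>). (\<beta> @ \<gamma>, length \<beta>)"])
  show "(\<lambda>(\<alpha>,j). (take j \<alpha>, drop j \<alpha>)) \<in> Sigma (count_class n m) (\<lambda>\<alpha>. {..length \<alpha>}) \<rightarrow> count_pairs n m"
    by (auto simp: count_class_def count_pairs_def pvec_append[symmetric])
  show "(\<lambda>(\<beta>,\<gamma>). (\<beta> @ \<gamma>, length \<beta>)) \<in> count_pairs n m \<rightarrow> Sigma (count_class n m) (\<lambda>\<alpha>. {..length \<alpha>})"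
    by (auto simp: count_class_def count_pairs_def pvec_append)
qed auto

lemma count_pairs_fibre:
  assumes "\<forall>i. k i \<le> m i"
  shows "{x \<in> count_pairs n m. pvec (fst x) = k} = count_class n k \<times> count_class n (\<lambda>i. m i - k i)"
proof -
  have "(\<lambda>i. pvec \<beta> i + pvec \<gamma> i) = m \<and> pvec \<beta> = k \<longleftrightarrow> pvec \<beta> = k \<and> pvec \<gamma> = (\<lambda>i. m i - k i)"
    for \<beta> \<gamma> :: "nat list"
    using assms by (auto simp: fun_eq_iff) (metis add_diff_cancel_left')+
  then show ?thesis by (auto simp: count_pairs_def count_class_def)
qed

lemma sum_count_pairs_fibre:
  "(\<Sum>(\<beta>,\<gamma>)\<in>count_class n k \<times> count_class n l. f \<beta> * g \<gamma> * qweight q (\<beta> @ \<gamma>))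
     = inverse q ^ cross_exp n k l * piq n q f k * piq n q g l"
proof -
  have "(\<Sum>(\<beta>,\<gamma>)\<in>count_class n k \<times> count_class n l. f \<beta> * g \<gamma> * qweight q (\<beta> @ \<gamma>))
      = (\<Sum>\<beta>\<in>count_class n k. \<Sum>\<gamma>\<in>count_class n l.
           inverse q ^ cross_exp n k l * ((f \<beta> * qweight q \<beta>) * (g \<gamma> * qweight q \<gamma>)))"
    unfolding sum.cartesian_product[symmetric]
    by (intro sum.cong refl) (auto simp: count_class_def qweight_append)
  also have "\<dots> = inverse q ^ cross_exp n k l * (piq n q f k * piq n q g l)"
    unfolding piq_def sum_product by (simp add: sum_distrib_left)
  finally show ?thesis by (simp only: mult.assoc)
qed

lemma piq_Fmult: "piq n q (Fmult f g) = Oqmult n q (piq n q f) (piq n q g)"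
proof
  fix m
  let ?K = "{k. \<forall>i. k i \<le> m i}" and ?T = "count_pairs n m"
  let ?F = "\<lambda>(\<beta>,\<gamma>). f \<beta> * g \<gamma> * qweight q (\<beta> @ \<gamma>)"
  have Oqmult_eq: "Oqmult n q a b m
      = (\<Sum>k\<in>?K. inverse q ^ cross_exp n k (\<lambda>i. m i - k i) * a k * b (\<lambda>i. m i - k i))" for a b
    by (simp add: Oqmult_def cross_exp_def)
  show "piq n q (Fmult f g) m = Oqmult n q (piq n q f) (piq n q g) m"
  proof (cases "m \<in> mindex n")
    case False
    have zero: "inverse q ^ cross_exp n k (\<lambda>i. m i - k i) * piq n q f k * piq n q g (\<lambda>i. m i - k i) = 0"
      if "k \<in> ?K" for k
    proof -
      have "k \<notin> mindex n \<or> (\<lambda>i. m i - k i) \<notin> mindex n"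
        using that False unfolding mindex_def by force
      then show ?thesis by (auto simp: piq_outside_mindex)
    qed
    have "Oqmult n q (piq n q f) (piq n q g) m = 0"
      unfolding Oqmult_eq by (rule sum.neutral) (use zero in blast)
    then show ?thesis using False by (simp add: piq_outside_mindex)
  next
    case True
    have "finite ?T"
      using bij_betw_finite[OF bij_betw_split_count_class] by auto
    have "piq n q (Fmult f g) m
        = (\<Sum>(\<alpha>,j)\<in>Sigma (count_class n m) (\<lambda>\<alpha>. {..length \<alpha>}). f (take j \<alpha>) * g (drop j \<alpha>) * qweight q \<alpha>)"
      by (simp add: piq_def Fmult_def sum_distrib_right sum.Sigma)
    also have "\<dots> = sum ?F ?T"
      by (subst sum.reindex_bij_betw[OF bij_betw_split_count_class, symmetric]) (auto intro!: sum.cong)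
    also have "\<dots> = (\<Sum>k\<in>?K. sum ?F {x\<in>?T. pvec (fst x) = k})"
      by (rule sum.group[symmetric])
      (use \<open>finite ?T\<close> finite_pointwise_le[OF True] in \<open>auto simp: count_pairs_def fun_eq_iff\<close>, metis le_add1)
    also have "\<dots> = Oqmult n q (piq n q f) (piq n q g) m"
      unfolding Oqmult_eq by (intro sum.cong refl) (simp add: count_pairs_fibre sum_count_pairs_fibre)
    finally show ?thesis .
  qed
qed

section \<open>Reduction of words modulo the q-commutators\<close>

locale qcomm_ideal =
  fixes n :: nat and r :: ereal and q :: complex and I :: "(nat list \<Rightarrow> complex) set"
  assumes ideal: "two_sided_ideal n r I"
    and qcomm_mem: "\<And>i j. 1 \<le> i \<Longrightarrow> i < j \<Longrightarrow> j \<le> n \<Longrightarrow> qcomm q i j \<in> I"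
    and q_nonzero: "q \<noteq> 0"
begin

lemma zero_mem: "(\<lambda>_. 0) \<in> I"
  and add_mem: "f \<in> I \<Longrightarrow> g \<in> I \<Longrightarrow> (\<lambda>w. f w + g w) \<in> I"
  and smult_mem: "f \<in> I \<Longrightarrow> (\<lambda>w. c * f w) \<in> I"
  and mult_left_mem: "a \<in> Fspace n r \<Longrightarrow> f \<in> I \<Longrightarrow> Fmult a f \<in> I"
  and mult_right_mem: "a \<in> Fspace n r \<Longrightarrow> f \<in> I \<Longrightarrow> Fmult f a \<in> I"
  using ideal unfolding two_sided_ideal_def by blast+

lemma diff_mem: "f \<in> I \<Longrightarrow> g \<in> I \<Longrightarrow> (\<lambda>w. f w - c * g w) \<in> I"
  using add_mem[of f "\<lambda>w. (- c) * g w"] smult_mem[of g "-c"] by simp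

lemma sum_mem: "finite A \<Longrightarrow> (\<And>a. a \<in> A \<Longrightarrow> g a \<in> I) \<Longrightarrow> (\<lambda>w. \<Sum>a\<in>A. g a w) \<in> I"
  by (induction A rule: finite_induct) (auto intro: zero_mem add_mem)

text \<open>Congruence \<open>A \<equiv> c B\<close> modulo \<open>I\<close> is expressed as \<open>(\<lambda>w. A w - c * B w) \<in> I\<close>.\<close>

lemma congruence_trans:
  assumes "(\<lambda>w. A w - c * B w) \<in> I" "(\<lambda>w. B w - d * C w) \<in> I"
  shows "(\<lambda>w. A w - (c * d) * C w) \<in> I"
  using diff_mem[OF assms, of "- c"] by (simp add: algebra_simps)

lemma swap_adjacent_mem:
  assumes "y < x" "1 \<le> y" "x \<le> n" "u \<in> words n" "v \<in> words n"
  shows "(\<lambda>w. wbasis (u @ [x,y] @ v) w - inverse q * wbasis (u @ [y,x] @ v) w) \<in> I"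
proof -
  have "Fmult (wbasis u) (qcomm q y x) \<in> I"
    using mult_left_mem wbasis_Fspace assms qcomm_mem by blast
  then have "Fmult (Fmult (wbasis u) (qcomm q y x)) (wbasis v) \<in> I"
    using mult_right_mem wbasis_Fspace assms by blast
  then have "(\<lambda>w. wbasis (u @ [y,x] @ v) w - q * wbasis (u @ [x,y] @ v) w) \<in> I"
    by (simp add: qcomm_eq_wbasis Fmult_diff_right Fmult_diff_left Fmult_wbasis)
  then have "(\<lambda>w. (- inverse q) * (wbasis (u @ [y,x] @ v) w - q * wbasis (u @ [x,y] @ v) w)) \<in> I"
    by (rule smult_mem)
  also have "(\<lambda>w. (- inverse q) * (wbasis (u @ [y,x] @ v) w - q * wbasis (u @ [x,y] @ v) w))
      = (\<lambda>w. wbasis (u @ [x,y] @ v) w - inverse q * wbasis (u @ [y,x] @ v) w)"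
    using q_nonzero by (auto simp: field_simps)
  finally show ?thesis .
qed

lemma insort_mem:
  assumes "sorted ys" "x \<in> {1..n}" "ys \<in> words n" "u \<in> words n"
  shows "(\<lambda>w. wbasis (u @ x # ys) w
            - inverse q ^ length (filter (\<lambda>y. y < x) ys) * wbasis (u @ insort x ys) w) \<in> I"
  using assms
proof (induction ys arbitrary: u)
  case Nil
  then show ?case using zero_mem by simp
next
  case (Cons y ys)
  show ?case
  proof (cases "x \<le> y")
    case True
    then have "filter (\<lambda>z. z < x) (y # ys) = []"
      using Cons.prems(1) by (auto simp: filter_empty_conv)
    then show ?thesis using True zero_mem by simp
  next
    case False
    have "(\<lambda>w. wbasis (u @ [x,y] @ ys) w - inverse q * wbasis (u @ [y,x] @ ys) w) \<in> I"
      using swap_adjacent_mem[of y x u ys] False Cons.prems by auto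
    moreover have "(\<lambda>w. wbasis ((u @ [y]) @ x # ys) w
        - inverse q ^ length (filter (\<lambda>z. z < x) ys) * wbasis ((u @ [y]) @ insort x ys) w) \<in> I"
      using Cons.IH[of "u @ [y]"] Cons.prems by auto
    ultimately show ?thesis
      using False congruence_trans by simp
  qed
qed

lemma sort_mem:
  assumes "\<alpha> \<in> words n"
  shows "(\<lambda>w. wbasis \<alpha> w - qweight q \<alpha> * wbasis (sort \<alpha>) w) \<in> I"
  using assms
proof (induction \<alpha>)
  case Nil
  then show ?case using zero_mem by (simp add: qweight_def)
next
  case (Cons x xs)
  have "Fmult (wbasis [x]) (\<lambda>w. wbasis xs w - qweight q xs * wbasis (sort xs) w) \<in> I"
    using Cons mult_left_mem wbasis_Fspace by auto
  then have "(\<lambda>w. wbasis (x # xs) w - qweight q xs * wbasis (x # sort xs) w) \<in> I"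
    by (simp add: Fmult_diff_right Fmult_wbasis)
  moreover have "(\<lambda>w. wbasis ([] @ x # sort xs) w - inverse q ^ length (filter (\<lambda>y. y < x) (sort xs))
      * wbasis ([] @ insort x (sort xs)) w) \<in> I"
    by (rule insort_mem) (use Cons.prems in \<open>auto simp: words_def\<close>)
  ultimately have "(\<lambda>w. wbasis (x # xs) w - (qweight q xs * inverse q ^ length (filter (\<lambda>y. y < x) xs))
      * wbasis (insort x (sort xs)) w) \<in> I"
    using congruence_trans by (simp add: filter_sort)
  then show ?case by (simp add: qweight_def power_add mult.commute)
qed

end

section \<open>The q-multinomial theorem\<close>

definition pair_sum :: "nat \<Rightarrow> (nat \<Rightarrow> nat) \<Rightarrow> nat" where
  "pair_sum n k = (\<Sum>i\<in>{1..n}. \<Sum>j\<in>{i<..n}. k i * k j)"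

lemma pair_sum_Suc: "pair_sum (Suc n) k = pair_sum n k + k (Suc n) * (\<Sum>i\<in>{1..n}. k i)"
proof -
  have "(\<Sum>j\<in>{i<..Suc n}. k i * k j) = (\<Sum>j\<in>{i<..n}. k i * k j) + k i * k (Suc n)" if "i \<in> {1..n}" for i
  proof -
    have "{i<..Suc n} = insert (Suc n) {i<..n}" using that by auto
    then show ?thesis by simp
  qed
  then show ?thesis
    by (simp add: pair_sum_def sum.cl_ivl_Suc sum.distrib sum_distrib_left mult.commute)
qed

lemma pair_sum_upd_Suc:
  assumes "x \<in> {1..n}"
  shows "pair_sum n (k(x := Suc (k x))) + k x = pair_sum n k + (\<Sum>j\<in>{1..n}. k j)"
  using assms
proof (induction n)
  case (Suc n)
  show ?case
  proof (cases "x = Suc n")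
    case True
    have "pair_sum n (k(x := m)) = pair_sum n k" for m
      unfolding pair_sum_def using True by (intro sum.cong refl) auto
    moreover have "(\<Sum>i\<in>{1..n}. (k(x := m)) i) = (\<Sum>i\<in>{1..n}. k i)" for m
      using True by (intro sum.cong refl) auto
    ultimately show ?thesis
      unfolding pair_sum_Suc[of n] using True by (simp add: sum.cl_ivl_Suc algebra_simps)
  next
    case False
    then have x: "x \<in> {1..n}" using Suc.prems by auto
    have "(\<Sum>i\<in>{1..n}. (k(x := Suc (k x))) i) = (\<Sum>i\<in>{1..n}. k i) + 1"
      using x by (simp add: sum.remove[of _ x])
    then show ?thesis
      using Suc.IH[OF x] False by (simp add: pair_sum_Suc sum.cl_ivl_Suc algebra_simps)
  qed
qed simp

lemma sum_split_at:
  fixes n :: nat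
  assumes "x \<in> {1..n}"
  shows "(\<Sum>j\<in>{1..n}. a j) = (\<Sum>j\<in>{1..<x}. a j) + a x + (\<Sum>j\<in>{x<..n}. a j :: nat)"
proof -
  have "{1..n} = insert x ({1..<x} \<union> {x<..n})" using assms by auto
  then have "(\<Sum>j\<in>{1..n}. a j) = a x + (\<Sum>j\<in>{1..<x} \<union> {x<..n}. a j)" by simp
  also have "(\<Sum>j\<in>{1..<x} \<union> {x<..n}. a j) = (\<Sum>j\<in>{1..<x}. a j) + (\<Sum>j\<in>{x<..n}. a j)"
    by (rule sum.union_disjoint) auto
  finally show ?thesis by simp
qed

lemma pair_sum_dec:
  assumes "0 < k x" "x \<in> {1..n}"
  shows "pair_sum n k = pair_sum n (k(x := k x - 1)) + (\<Sum>j\<in>{1..<x}. k j) + (\<Sum>j\<in>{x<..n}. k j)"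
proof -
  let ?k' = "k(x := k x - 1)"
  have "?k'(x := Suc (?k' x)) = k" using assms(1) by auto
  moreover have "(\<Sum>j\<in>{1..n}. ?k' j) = (\<Sum>j\<in>{1..<x}. k j) + ?k' x + (\<Sum>j\<in>{x<..n}. k j)"
    using sum_split_at[OF assms(2), of ?k'] by simp
  ultimately show ?thesis
    using pair_sum_upd_Suc[OF assms(2), of ?k'] by simp
qed

lemma qint_add: "qint t (a + b) = qint t b + t ^ b * qint t a"
  unfolding qint_def by (induction a) (simp_all add: algebra_simps power_add)

lemma qint_sum_telescope:
  "(\<Sum>x\<in>{1..n::nat}. qint t (a x) * t ^ (\<Sum>j\<in>{x<..n}. a j)) = qint t (\<Sum>x\<in>{1..n}. a x)"
proof (induction n)
  case (Suc n)
  have "(\<Sum>j\<in>{x<..Suc n}. a j) = (\<Sum>j\<in>{x<..n}. a j) + a (Suc n)" if "x \<in> {1..n}" for x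
  proof -
    have "{x<..Suc n} = insert (Suc n) {x<..n}" using that by auto
    then show ?thesis by simp
  qed
  then have "(\<Sum>x\<in>{1..Suc n}. qint t (a x) * t ^ (\<Sum>j\<in>{x<..Suc n}. a j))
      = t ^ a (Suc n) * (\<Sum>x\<in>{1..n}. qint t (a x) * t ^ (\<Sum>j\<in>{x<..n}. a j)) + qint t (a (Suc n))"
    by (simp add: sum.cl_ivl_Suc sum_distrib_left power_add mult_ac)
  also have "\<dots> = qint t (\<Sum>x\<in>{1..Suc n}. a x)"
    using Suc.IH by (simp add: sum.cl_ivl_Suc qint_add)
  finally show ?case .
qed (simp add: qint_def)

lemma qfact_multi_dec:
  assumes "0 < k x" "x \<in> {1..n}"
  shows "qfact_multi n t k = qfact_multi n t (k(x := k x - 1)) * qint t (k x)"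
proof -
  have "qfact t (k x) = qfact t (k x - 1) * qint t (k x)"
    using assms(1) by (cases "k x") (simp_all add: qfact_def)
  then show ?thesis
    unfolding qfact_multi_def using assms(2) by (simp add: prod.remove[of _ x] mult_ac)
qed

lemma mabs_dec:
  assumes "0 < k x" "x \<in> {1..n}"
  shows "mabs n k = Suc (mabs n (k(x := k x - 1)))"
  using assms by (simp add: mabs_def sum.remove[of _ x])

lemma pvec_Cons_eq_iff:
  assumes "0 < k x"
  shows "pvec (x # \<beta>) = k \<longleftrightarrow> pvec \<beta> = k(x := k x - 1)"
  using assms by (auto simp: pvec_Cons fun_eq_iff)

lemma count_class_first_letter:
  assumes "0 < k x" "x \<in> {1..n}"
  shows "{\<alpha> \<in> count_class n k. \<alpha> \<noteq> [] \<and> hd \<alpha> = x} = (\<lambda>\<beta>. x # \<beta>) ` count_class n (k(x := k x - 1))"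
proof (rule set_eqI)
  fix \<alpha>
  show "\<alpha> \<in> {\<alpha> \<in> count_class n k. \<alpha> \<noteq> [] \<and> hd \<alpha> = x} \<longleftrightarrow> \<alpha> \<in> (\<lambda>\<beta>. x # \<beta>) ` count_class n (k(x := k x - 1))"
    using pvec_Cons_eq_iff[where k = k and x = x, OF assms(1)] assms(2) by (cases \<alpha>) (auto simp: count_class_def)
qed

lemma count_class_first_letter_empty:
  assumes "k x = 0"
  shows "{\<alpha> \<in> count_class n k. \<alpha> \<noteq> [] \<and> hd \<alpha> = x} = {}"
  using assms by (auto simp: count_class_def neq_Nil_conv pvec_Cons)

definition inv_weight_sum :: "nat \<Rightarrow> real \<Rightarrow> (nat \<Rightarrow> nat) \<Rightarrow> real" where
  "inv_weight_sum n t k = (\<Sum>\<alpha>\<in>count_class n k. inverse t ^ inversions \<alpha>)"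

lemma inv_weight_sum_first_letter:
  assumes "0 < k x" "x \<in> {1..n}"
  shows "(\<Sum>\<alpha>\<in>{\<alpha> \<in> count_class n k. \<alpha> \<noteq> [] \<and> hd \<alpha> = x}. inverse t ^ inversions \<alpha>)
       = inverse t ^ (\<Sum>j\<in>{1..<x}. k j) * inv_weight_sum n t (k(x := k x - 1))"
proof -
  have "length (filter (\<lambda>y. y < x) \<beta>) = (\<Sum>j\<in>{1..<x}. k j)" if "\<beta> \<in> count_class n (k(x := k x - 1))" for \<beta>
    using that length_filter_less_eq_sum_pvec[of \<beta> n x] by (auto simp: count_class_def)
  then show ?thesis
    unfolding count_class_first_letter[where k = k and x = x, OF assms] inv_weight_sum_def
    by (subst sum.reindex) (auto simp: inj_on_def power_add sum_distrib_left)
qed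

lemma inv_weight_sum_first_letter_term:
  assumes t: "0 < t" and kx: "0 < k x" and x: "x \<in> {1..n}"
    and IH: "inv_weight_sum n t (k(x := k x - 1)) * qfact_multi n t (k(x := k x - 1))
               * t ^ pair_sum n (k(x := k x - 1)) = c"
  shows "(\<Sum>\<alpha>\<in>{\<alpha> \<in> count_class n k. \<alpha> \<noteq> [] \<and> hd \<alpha> = x}. inverse t ^ inversions \<alpha>)
           * qfact_multi n t k * t ^ pair_sum n k
       = c * qint t (k x) * t ^ (\<Sum>j\<in>{x<..n}. k j)"
proof -
  let ?k' = "k(x := k x - 1)" and ?L = "\<Sum>j\<in>{1..<x}. k j" and ?R = "\<Sum>j\<in>{x<..n}. k j"
  have "(\<Sum>\<alpha>\<in>{\<alpha> \<in> count_class n k. \<alpha> \<noteq> [] \<and> hd \<alpha> = x}. inverse t ^ inversions \<alpha>)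
           * qfact_multi n t k * t ^ pair_sum n k
      = inverse t ^ ?L * inv_weight_sum n t ?k' * (qfact_multi n t ?k' * qint t (k x))
           * t ^ (pair_sum n ?k' + ?L + ?R)"
    by (simp only: inv_weight_sum_first_letter[where k = k and x = x, OF kx x]
        qfact_multi_dec[where k = k and x = x, OF kx x] pair_sum_dec[where k = k and x = x, OF kx x])
  also have "\<dots> = (inv_weight_sum n t ?k' * qfact_multi n t ?k' * t ^ pair_sum n ?k') * qint t (k x)
           * t ^ ?R * (inverse t ^ ?L * t ^ ?L)"
    by (simp only: power_add mult_ac)
  also have "\<dots> = c * qint t (k x) * t ^ ?R * (inverse t ^ ?L * t ^ ?L)"
    by (simp only: IH)
  also have "inverse t ^ ?L * t ^ ?L = 1"
    using t by (simp add: power_mult_distrib[symmetric])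
  finally show ?thesis by simp
qed

lemma mindex_mabs_eq_0: "k \<in> mindex n \<Longrightarrow> mabs n k = 0 \<Longrightarrow> k = (\<lambda>_. 0)"
  by (auto simp: mindex_def mabs_def fun_eq_iff)

lemma count_class_zero: "count_class n (\<lambda>_. 0) = {[]}"
proof -
  have "\<alpha> = []" if "\<alpha> \<in> count_class n (\<lambda>_. 0)" for \<alpha>
    using that mabs_pvec[of \<alpha> n] by (simp add: count_class_def mabs_def)
  then show ?thesis by (auto simp: count_class_def pvec_def fun_eq_iff)
qed

lemma inv_weight_sum_split_first_letter:
  assumes "mabs n k \<noteq> 0"
  shows "inv_weight_sum n t k
       = (\<Sum>x\<in>{1..n}. \<Sum>\<alpha>\<in>{\<alpha> \<in> count_class n k. \<alpha> \<noteq> [] \<and> hd \<alpha> = x}. inverse t ^ inversions \<alpha>)"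
proof -
  have ne: "\<alpha> \<noteq> []" if "\<alpha> \<in> count_class n k" for \<alpha>
    using that mabs_pvec[of \<alpha> n] assms by (auto simp: count_class_def)
  have hd: "hd \<alpha> \<in> {1..n}" if "\<alpha> \<in> count_class n k" for \<alpha>
  proof -
    have "hd \<alpha> \<in> set \<alpha>" using ne[OF that] by (rule hd_in_set)
    then show ?thesis using that by (auto simp: count_class_def words_def)
  qed
  have "inv_weight_sum n t k
      = (\<Sum>x\<in>{1..n}. \<Sum>\<alpha>\<in>{\<alpha> \<in> count_class n k. hd \<alpha> = x}. inverse t ^ inversions \<alpha>)"
    unfolding inv_weight_sum_def by (rule sum.group[symmetric]) (use hd in auto)
  also have "\<dots> = (\<Sum>x\<in>{1..n}. \<Sum>\<alpha>\<in>{\<alpha> \<in> count_class n k. \<alpha> \<noteq> [] \<and> hd \<alpha> = x}. inverse t ^ inversions \<alpha>)"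
    using ne by (intro sum.cong refl arg_cong[where f = "\<lambda>A. sum _ A"]) auto
  finally show ?thesis .
qed

theorem inv_weight_sum_qmultinomial:
  assumes "0 < t" "k \<in> mindex n"
  shows "inv_weight_sum n t k * qfact_multi n t k * t ^ pair_sum n k = qfact t (mabs n k)"
  using assms(2)
proof (induction "mabs n k" arbitrary: k)
  case 0
  then have "k = (\<lambda>_. 0)" by (simp add: mindex_mabs_eq_0)
  then show ?case
    by (simp add: inv_weight_sum_def count_class_zero qfact_multi_def qfact_def pair_sum_def mabs_def)
next
  case (Suc d)
  have by_letter: "(\<Sum>\<alpha>\<in>{\<alpha> \<in> count_class n k. \<alpha> \<noteq> [] \<and> hd \<alpha> = x}. inverse t ^ inversions \<alpha>)
           * qfact_multi n t k * t ^ pair_sum n k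
       = qfact t d * qint t (k x) * t ^ (\<Sum>j\<in>{x<..n}. k j)" if x: "x \<in> {1..n}" for x
  proof (cases "k x = 0")
    case True
    then show ?thesis by (simp add: count_class_first_letter_empty qint_def)
  next
    case False
    then have kx: "0 < k x" by simp
    have "k(x := k x - 1) \<in> mindex n" using Suc.prems by (auto simp: mindex_def)
    moreover have "d = mabs n (k(x := k x - 1))"
      using mabs_dec[where k = k and x = x, OF kx x] Suc.hyps(2) by simp
    ultimately show ?thesis
      by (intro inv_weight_sum_first_letter_term[where k = k and x = x, OF assms(1) kx x])
        (simp add: Suc.hyps(1))
  qed
  have "inv_weight_sum n t k * qfact_multi n t k * t ^ pair_sum n k
      = (\<Sum>x\<in>{1..n}. qfact t d * qint t (k x) * t ^ (\<Sum>j\<in>{x<..n}. k j))"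
    using by_letter inv_weight_sum_split_first_letter[of n k t] Suc.hyps(2)
    by (simp add: sum_distrib_right)
  also have "\<dots> = qfact t d * qint t (mabs n k)"
    unfolding mabs_def qint_sum_telescope[symmetric] by (simp add: sum_distrib_left mult.assoc)
  finally show ?case using Suc.hyps(2)[symmetric] by (simp add: qfact_def)
qed

section \<open>The norms on a fibre of the letter count\<close>

definition class_norm :: "nat \<Rightarrow> (nat list \<Rightarrow> complex) \<Rightarrow> (nat \<Rightarrow> nat) \<Rightarrow> real" where
  "class_norm n f k = sqrt (\<Sum>\<alpha>\<in>count_class n k. (cmod (f \<alpha>))\<^sup>2)"

lemma class_norm_nonneg: "class_norm n f k \<ge> 0"
  by (simp add: class_norm_def sum_nonneg)

lemma normF_circ_eq_class_norm: "normF_circ n f \<rho> = (\<Sum>\<^sub>\<infinity>k\<in>mindex n. class_norm n f k * \<rho> ^ mabs n k)"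
  by (simp add: normF_circ_def class_norm_def count_class_def)

definition qweight_sqnorm :: "nat \<Rightarrow> complex \<Rightarrow> (nat \<Rightarrow> nat) \<Rightarrow> real" where
  "qweight_sqnorm n q k = (\<Sum>\<alpha>\<in>count_class n k. (cmod (qweight q \<alpha>))\<^sup>2)"

lemma qweight_sqnorm_nonneg: "qweight_sqnorm n q k \<ge> 0"
  by (simp add: qweight_sqnorm_def sum_nonneg)

lemma qweight_sqnorm_eq_inv_weight_sum:
  assumes "q \<noteq> 0"
  shows "qweight_sqnorm n q k = inv_weight_sum n ((cmod q)\<^sup>2) k"
proof -
  have "(cmod (qweight q \<alpha>))\<^sup>2 = inverse ((cmod q)\<^sup>2) ^ inversions \<alpha>" for \<alpha>
    by (simp add: qweight_def norm_power norm_inverse power_inverse flip: power_mult)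
      (simp add: power_mult mult.commute)
  then show ?thesis by (simp add: qweight_sqnorm_def inv_weight_sum_def)
qed

lemma qint_ge_1: "t \<ge> 0 \<Longrightarrow> j \<ge> 1 \<Longrightarrow> qint t j \<ge> 1"
  unfolding qint_def by (subst sum.remove[of _ 0]) (auto intro: sum_nonneg)

lemma qfact_pos: "t \<ge> 0 \<Longrightarrow> qfact t m > 0"
  unfolding qfact_def using qint_ge_1 by (intro prod_pos) fastforce

lemma qfact_multi_pos: "t \<ge> 0 \<Longrightarrow> qfact_multi n t k > 0"
  unfolding qfact_multi_def using qfact_pos by (intro prod_pos) auto

lemma Bterm_nonneg: "Bterm n q k \<ge> 0"
  unfolding Bterm_def uq_def using qfact_multi_pos[of "(cmod q)\<^sup>2" n k] qfact_pos[of "(cmod q)\<^sup>2"]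
  by (intro mult_nonneg_nonneg) (auto intro!: divide_nonneg_pos less_imp_le)

text \<open>The q-multinomial theorem, read as: the weight of \<open>x^k\<close> in \<open>\<parallel>\<cdot>\<parallel>_\<B>,\<rho>\<close> is the reciprocal
  of the \<open>\<ell>\<^sup>2\<close>-norm of \<open>\<pi>\<close> restricted to the words of letter count \<open>k\<close>.\<close>

lemma
  assumes "q \<noteq> 0" and "k \<in> mindex n"
  shows qweight_sqnorm_pos: "qweight_sqnorm n q k > 0"
    and Bterm_eq_qweight_sqnorm: "Bterm n q k = 1 / sqrt (qweight_sqnorm n q k)"
proof -
  define t where "t = (cmod q)\<^sup>2"
  have t: "t > 0" using assms(1) by (simp add: t_def)
  have id: "qweight_sqnorm n q k * qfact_multi n t k * t ^ pair_sum n k = qfact t (mabs n k)"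
    using inv_weight_sum_qmultinomial[OF t assms(2)] qweight_sqnorm_eq_inv_weight_sum[OF assms(1)]
    by (simp add: t_def)
  have pos: "qfact t (mabs n k) > 0" "qfact_multi n t k > 0" "t ^ pair_sum n k > 0"
    using qfact_pos qfact_multi_pos t by auto
  show N: "qweight_sqnorm n q k > 0"
    using id pos qweight_sqnorm_nonneg[of n q k] by (cases "qweight_sqnorm n q k = 0") auto
  have "(uq n q k)\<^sup>2 = t ^ pair_sum n k"
    by (simp add: uq_def pair_sum_def t_def flip: power_mult) (simp add: mult.commute)
  then have "(Bterm n q k)\<^sup>2 = qfact_multi n t k / qfact t (mabs n k) * t ^ pair_sum n k"
    unfolding Bterm_def power_mult_distrib t_def[symmetric] using pos by simp
  also have "\<dots> = 1 / qweight_sqnorm n q k"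
    using id pos N by (simp add: field_simps)
  finally have "(Bterm n q k)\<^sup>2 = 1 / qweight_sqnorm n q k" .
  moreover have "Bterm n q k = sqrt ((Bterm n q k)\<^sup>2)"
    using Bterm_nonneg[of n q k] by simp
  ultimately show "Bterm n q k = 1 / sqrt (qweight_sqnorm n q k)"
    by (simp add: real_sqrt_divide)
qed

lemma piq_Bterm_le_class_norm:
  assumes "q \<noteq> 0"
  shows "cmod (piq n q f k) * Bterm n q k \<le> class_norm n f k"
proof (cases "k \<in> mindex n")
  case False
  then show ?thesis by (simp add: piq_outside_mindex class_norm_nonneg)
next
  case True
  have "cmod (piq n q f k) \<le> (\<Sum>\<alpha>\<in>count_class n k. \<bar>cmod (f \<alpha>)\<bar> * \<bar>cmod (qweight q \<alpha>)\<bar>)"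
    unfolding piq_def by (rule order.trans[OF norm_sum]) (simp add: norm_mult)
  also have "\<dots> \<le> L2_set (\<lambda>\<alpha>. cmod (f \<alpha>)) (count_class n k) * L2_set (\<lambda>\<alpha>. cmod (qweight q \<alpha>)) (count_class n k)"
    by (rule L2_set_mult_ineq)
  also have "\<dots> = class_norm n f k * sqrt (qweight_sqnorm n q k)"
    by (simp add: L2_set_def class_norm_def qweight_sqnorm_def)
  finally have "cmod (piq n q f k) * Bterm n q k \<le> class_norm n f k * sqrt (qweight_sqnorm n q k) * Bterm n q k"
    by (rule mult_right_mono) (rule Bterm_nonneg)
  also have "\<dots> = class_norm n f k"
    using Bterm_eq_qweight_sqnorm[OF assms True] qweight_sqnorm_pos[OF assms True] by simp
  finally show ?thesis .
qed

text \<open>On each fibre the lift is a multiple of the conjugate weight vector, so it attains equality in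
  the Cauchy-Schwarz estimate above.\<close>

definition qlift :: "nat \<Rightarrow> complex \<Rightarrow> ((nat \<Rightarrow> nat) \<Rightarrow> complex) \<Rightarrow> nat list \<Rightarrow> complex" where
  "qlift n q a = (\<lambda>\<alpha>. if \<alpha> \<in> words n then a (pvec \<alpha>) * cnj (qweight q \<alpha>) / qweight_sqnorm n q (pvec \<alpha>) else 0)"

lemma qlift_add: "qlift n q (\<lambda>k. a k + b k) = (\<lambda>\<alpha>. qlift n q a \<alpha> + qlift n q b \<alpha>)"
  by (auto simp: qlift_def add_divide_distrib algebra_simps)

lemma qlift_smult: "qlift n q (\<lambda>k. c * a k) = (\<lambda>\<alpha>. c * qlift n q a \<alpha>)"
  by (auto simp: qlift_def)

lemma qlift_zero: "qlift n q (\<lambda>_. 0) = (\<lambda>_. 0)"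
  by (auto simp: qlift_def)

lemma piq_qlift:
  assumes "q \<noteq> 0" and "\<And>k. k \<notin> mindex n \<Longrightarrow> a k = 0"
  shows "piq n q (qlift n q a) = a"
proof
  fix k
  show "piq n q (qlift n q a) k = a k"
  proof (cases "k \<in> mindex n")
    case False
    then show ?thesis using assms(2) by (simp add: piq_outside_mindex)
  next
    case True
    have "piq n q (qlift n q a) k
        = a k / qweight_sqnorm n q k * (\<Sum>\<alpha>\<in>count_class n k. cnj (qweight q \<alpha>) * qweight q \<alpha>)"
      unfolding piq_def qlift_def sum_distrib_left by (intro sum.cong refl) (auto simp: count_class_def)
    also have "(\<Sum>\<alpha>\<in>count_class n k. cnj (qweight q \<alpha>) * qweight q \<alpha>)
        = (\<Sum>\<alpha>\<in>count_class n k. of_real ((cmod (qweight q \<alpha>))\<^sup>2))"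
      by (intro sum.cong refl) (metis complex_norm_square mult.commute of_real_power)
    also have "\<dots> = of_real (qweight_sqnorm n q k)"
      by (simp add: qweight_sqnorm_def)
    finally show ?thesis
      using qweight_sqnorm_pos[OF assms(1) True] by simp
  qed
qed

lemma class_norm_qlift:
  assumes "q \<noteq> 0" and "k \<in> mindex n"
  shows "class_norm n (qlift n q a) k = cmod (a k) * Bterm n q k"
proof -
  have N: "qweight_sqnorm n q k > 0" by (rule qweight_sqnorm_pos[OF assms])
  have "(\<Sum>\<alpha>\<in>count_class n k. (cmod (qlift n q a \<alpha>))\<^sup>2)
      = (\<Sum>\<alpha>\<in>count_class n k. (cmod (a k))\<^sup>2 / (qweight_sqnorm n q k)\<^sup>2 * (cmod (qweight q \<alpha>))\<^sup>2)"
    unfolding qlift_def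
    by (intro sum.cong refl) (auto simp: count_class_def norm_mult norm_divide power_mult_distrib power_divide)
  also have "\<dots> = (cmod (a k))\<^sup>2 / (qweight_sqnorm n q k)\<^sup>2 * qweight_sqnorm n q k"
    by (simp add: sum_distrib_left qweight_sqnorm_def)
  also have "\<dots> = (cmod (a k))\<^sup>2 / qweight_sqnorm n q k"
    using N by (simp add: power2_eq_square)
  finally show ?thesis
    using N Bterm_eq_qweight_sqnorm[OF assms] by (simp add: class_norm_def real_sqrt_divide)
qed

section \<open>Comparison of the two norms on \<open>\<F>(\<B>\<^sub>r\<^sup>n)\<close>\<close>

lemma wblock_eq_L2_class_norm: "wblock n f d = L2_set (class_norm n f) (mindex_deg n d)"
proof -
  have "(\<Sum>\<alpha>\<in>{\<alpha> \<in> words n. length \<alpha> = d}. (cmod (f \<alpha>))\<^sup>2)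
      = (\<Sum>k\<in>mindex_deg n d. \<Sum>\<alpha>\<in>{\<alpha> \<in> {\<alpha> \<in> words n. length \<alpha> = d}. pvec \<alpha> = k}. (cmod (f \<alpha>))\<^sup>2)"
    by (rule sum.group[symmetric])
      (use finite_mindex_deg[of n d] in \<open>auto simp: finite_words_length_eq mindex_deg_def pvec_in_mindex mabs_pvec\<close>)
  also have "\<dots> = (\<Sum>k\<in>mindex_deg n d. (class_norm n f k)\<^sup>2)"
  proof (rule sum.cong[OF refl])
    fix k assume "k \<in> mindex_deg n d"
    then have "{\<alpha> \<in> {\<alpha> \<in> words n. length \<alpha> = d}. pvec \<alpha> = k} = count_class n k"
      by (auto simp: count_class_def mindex_deg_def mabs_pvec[symmetric])
    then show "(\<Sum>\<alpha>\<in>{\<alpha> \<in> {\<alpha> \<in> words n. length \<alpha> = d}. pvec \<alpha> = k}. (cmod (f \<alpha>))\<^sup>2) = (class_norm n f k)\<^sup>2"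
      by (simp add: class_norm_def sum_nonneg)
  qed
  finally show ?thesis by (simp add: wblock_def L2_set_def)
qed

lemma wblock_le_sum_class_norm: "wblock n f d \<le> (\<Sum>k\<in>mindex_deg n d. class_norm n f k)"
  unfolding wblock_eq_L2_class_norm by (rule L2_set_le_sum) (simp add: class_norm_nonneg)

lemma sum_class_norm_le_wblock:
  "(\<Sum>k\<in>mindex_deg n d. class_norm n f k) \<le> sqrt (card (mindex_deg n d)) * wblock n f d"
proof -
  have "(\<Sum>k\<in>mindex_deg n d. class_norm n f k) = (\<Sum>k\<in>mindex_deg n d. \<bar>class_norm n f k\<bar> * \<bar>1\<bar>)"
    by (simp add: class_norm_nonneg)
  also have "\<dots> \<le> L2_set (class_norm n f) (mindex_deg n d) * L2_set (\<lambda>_. 1) (mindex_deg n d)"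
    by (rule L2_set_mult_ineq)
  finally show ?thesis by (simp add: wblock_eq_L2_class_norm L2_set_constant mult.commute)
qed

lemma class_norm_le_wblock: "class_norm n f k \<le> wblock n f (mabs n k)"
  unfolding class_norm_def wblock_def
  by (intro real_sqrt_le_mono sum_mono2[OF finite_words_length_eq count_class_subset]) simp

lemma poly_times_geometric_bounded:
  fixes x :: real
  assumes "0 \<le> x" "x < 1"
  shows "\<exists>B. \<forall>d. real ((d + 1) ^ n) * x ^ d \<le> B"
proof (cases "n = 0")
  case True
  then show ?thesis using assms by (intro exI[of _ 1]) (auto intro: power_le_one)
next
  case False
  define y where "y = root n x"
  have y: "0 \<le> y" "y < 1" "y ^ n = x" using assms False by (auto simp: y_def real_root_ge_zero)
  have "(\<lambda>d. of_nat d * y ^ d) \<longlonglongrightarrow> 0" using y by (intro powser_times_n_limit_0) simp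
  then have "Bseq (\<lambda>d. of_nat d * y ^ d)" by (rule convergent_imp_Bseq[OF convergentI])
  then obtain K where K: "\<And>d. norm (of_nat d * y ^ d) \<le> K" by (auto simp: Bseq_def)
  have b: "real (d + 1) * y ^ d \<le> K + 1" for d
    using K[of d] y by (auto simp: algebra_simps abs_le_iff intro!: add_mono power_le_one)
  have "real ((d + 1) ^ n) * x ^ d \<le> (K + 1) ^ n" for d
  proof -
    have "real ((d + 1) ^ n) * x ^ d = (real (d + 1) * y ^ d) ^ n"
      by (simp add: power_mult_distrib y(3)[symmetric] power_mult[symmetric] mult.commute)
    also have "\<dots> \<le> (K + 1) ^ n" using b[of d] y by (intro power_mono) auto
    finally show ?thesis .
  qed
  then show ?thesis by blast
qed

lemma sqrt_card_mindex_deg_bound: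
  assumes "0 < \<rho>" "\<rho> < \<rho>'"
  obtains B where "B \<ge> 0" "\<And>d. sqrt (card (mindex_deg n d)) * \<rho> ^ d \<le> B * \<rho>' ^ d"
proof -
  obtain B where B: "\<And>d. real ((d + 1) ^ n) * (\<rho> / \<rho>') ^ d \<le> B"
    using poly_times_geometric_bounded[of "\<rho> / \<rho>'" n] assms by auto
  have "sqrt (card (mindex_deg n d)) * \<rho> ^ d \<le> B * \<rho>' ^ d" for d
  proof -
    have "sqrt (card (mindex_deg n d)) \<le> sqrt (real (card (mindex_deg n d)) * card (mindex_deg n d))"
      by (rule real_sqrt_le_mono) (metis le_square of_nat_le_iff of_nat_mult)
    also have "\<dots> = card (mindex_deg n d)" by simp
    also have "\<dots> \<le> real ((d + 1) ^ n)"
      using card_mindex_deg_le[of n d] by linarith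
    finally have "sqrt (card (mindex_deg n d)) * \<rho> ^ d \<le> real ((d + 1) ^ n) * (\<rho> / \<rho>') ^ d * \<rho>' ^ d"
      using assms by (simp add: power_divide mult_right_mono)
    also have "\<dots> \<le> B * \<rho>' ^ d" using B[of d] assms by (intro mult_right_mono) auto
    finally show ?thesis .
  qed
  moreover have "B \<ge> 0" using B[of 0] by simp
  ultimately show ?thesis using that by blast
qed

lemma partial_sum_wblock_le:
  assumes "0 \<le> \<rho>"
  shows "(\<Sum>d\<le>D. wblock n f d * \<rho> ^ d) \<le> (\<Sum>k\<in>mindex_le n D. class_norm n f k * \<rho> ^ mabs n k)"
proof -
  have "(\<Sum>d\<le>D. wblock n f d * \<rho> ^ d) \<le> (\<Sum>d\<le>D. (\<Sum>k\<in>mindex_deg n d. class_norm n f k) * \<rho> ^ d)"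
    using assms by (intro sum_mono mult_right_mono wblock_le_sum_class_norm) auto
  also have "\<dots> = (\<Sum>k\<in>mindex_le n D. class_norm n f k * \<rho> ^ mabs n k)"
    unfolding sum_mindex_le sum_distrib_right by (intro sum.cong refl) (simp add: mindex_deg_def)
  finally show ?thesis .
qed

lemma class_norm_summable_and_bound:
  assumes \<rho>: "0 < \<rho>" "0 < \<rho>'" and B: "B \<ge> 0" "\<And>d. sqrt (card (mindex_deg n d)) * \<rho> ^ d \<le> B * \<rho>' ^ d"
    and s: "summable (\<lambda>d. wblock n f d * \<rho>' ^ d)"
  shows "(\<lambda>k. class_norm n f k * \<rho> ^ mabs n k) summable_on mindex n"
    and "normF_circ n f \<rho> \<le> B * (\<Sum>d. wblock n f d * \<rho>' ^ d)"
proof -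
  let ?g = "\<lambda>k. class_norm n f k * \<rho> ^ mabs n k"
  have nonneg: "\<And>k. ?g k \<ge> 0" using \<rho> by (simp add: class_norm_nonneg)
  have finite_sums: "sum ?g F \<le> B * (\<Sum>d. wblock n f d * \<rho>' ^ d)" if "finite F" "F \<subseteq> mindex n" for F
  proof -
    define D where "D = (\<Sum>k\<in>F. mabs n k)"
    have "sum ?g F \<le> sum ?g (mindex_le n D)"
      by (rule sum_mono2[OF finite_mindex_le]) (use subset_mindex_le[OF that] nonneg in \<open>auto simp: D_def\<close>)
    also have "\<dots> = (\<Sum>d\<le>D. (\<Sum>k\<in>mindex_deg n d. class_norm n f k) * \<rho> ^ d)"
      unfolding sum_mindex_le sum_distrib_right by (intro sum.cong refl) (simp add: mindex_deg_def)
    also have "\<dots> \<le> (\<Sum>d\<le>D. B * (wblock n f d * \<rho>' ^ d))"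
    proof (rule sum_mono)
      fix d
      have "(\<Sum>k\<in>mindex_deg n d. class_norm n f k) * \<rho> ^ d \<le> (sqrt (card (mindex_deg n d)) * \<rho> ^ d) * wblock n f d"
        using sum_class_norm_le_wblock \<rho> by (simp add: mult_right_mono mult_ac)
      also have "\<dots> \<le> (B * \<rho>' ^ d) * wblock n f d"
        using B(2)[of d] by (intro mult_right_mono) (auto simp: wblock_nonneg)
      finally show "(\<Sum>k\<in>mindex_deg n d. class_norm n f k) * \<rho> ^ d \<le> B * (wblock n f d * \<rho>' ^ d)"
        by (simp add: mult_ac)
    qed
    also have "\<dots> \<le> B * (\<Sum>d. wblock n f d * \<rho>' ^ d)"
      unfolding sum_distrib_left[symmetric] using B(1) \<rho>
      by (intro mult_left_mono sum_le_suminf[OF s]) (auto simp: wblock_nonneg)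
    finally show ?thesis .
  qed
  show summable: "?g summable_on mindex n"
    by (rule nonneg_bdd_above_summable_on) (use nonneg finite_sums in \<open>auto simp: bdd_above_def\<close>)
  show "normF_circ n f \<rho> \<le> B * (\<Sum>d. wblock n f d * \<rho>' ^ d)"
    unfolding normF_circ_eq_class_norm by (rule infsum_le_finite_sums[OF summable finite_sums])
qed

lemma larger_radius:
  assumes "0 < \<rho>" "ereal \<rho> < r"
  obtains \<rho>' where "\<rho> < \<rho>'" "0 < \<rho>'" "ereal \<rho>' < r"
proof -
  obtain z where "ereal \<rho> < ereal z" "ereal z < r" using ereal_dense2[OF assms(2)] by blast
  then show ?thesis using that assms(1) by auto
qed

lemma class_norm_summable:
  assumes f: "f \<in> Fspace n r" and \<rho>: "0 < \<rho>" "ereal \<rho> < r"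
  shows "(\<lambda>k. class_norm n f k * \<rho> ^ mabs n k) summable_on mindex n"
proof -
  obtain \<rho>' where \<rho>': "\<rho> < \<rho>'" "0 < \<rho>'" "ereal \<rho>' < r" using larger_radius[OF \<rho>] .
  obtain B where "B \<ge> 0" "\<And>d. sqrt (card (mindex_deg n d)) * \<rho> ^ d \<le> B * \<rho>' ^ d"
    using sqrt_card_mindex_deg_bound[where n = n, OF \<rho>(1) \<rho>'(1)] by blast
  from class_norm_summable_and_bound(1)[OF \<rho>(1) \<rho>'(2) this Fspace_summable[OF f \<rho>'(2,3)]]
  show ?thesis .
qed

lemma normF_circ_le_bullet:
  assumes "0 < \<rho>" "ereal \<rho> < r"
  obtains \<rho>' B where "0 < \<rho>'" "\<rho> < \<rho>'" "ereal \<rho>' < r"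
    and "\<And>f. f \<in> Fspace n r \<Longrightarrow> normF_circ n f \<rho> \<le> B * normF_bullet n f \<rho>'"
proof -
  obtain \<rho>' where \<rho>': "\<rho> < \<rho>'" "0 < \<rho>'" "ereal \<rho>' < r" using larger_radius[OF assms] .
  obtain B where B: "B \<ge> 0" "\<And>d. sqrt (card (mindex_deg n d)) * \<rho> ^ d \<le> B * \<rho>' ^ d"
    using sqrt_card_mindex_deg_bound[where n = n, OF assms(1) \<rho>'(1)] by blast
  note bound = class_norm_summable_and_bound(2)[OF assms(1) \<rho>'(2) B Fspace_summable[OF _ \<rho>'(2,3)]]
  show ?thesis
  proof (rule that[OF \<rho>'(2,1,3)])
    fix f assume f: "f \<in> Fspace n r"
    show "normF_circ n f \<rho> \<le> B * normF_bullet n f \<rho>'"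
      using bound[OF f] by (simp add: normF_bullet_eq_suminf[OF f \<rho>'(2,3)])
  qed
qed

lemma normF_bullet_le_circ:
  assumes f: "f \<in> Fspace n r" and \<rho>: "0 < \<rho>" "ereal \<rho> < r"
  shows "normF_bullet n f \<rho> \<le> normF_circ n f \<rho>"
proof -
  let ?g = "\<lambda>k. class_norm n f k * \<rho> ^ mabs n k"
  have "(\<Sum>d. wblock n f d * \<rho> ^ d) \<le> infsum ?g (mindex n)"
  proof (rule suminf_le_const[OF Fspace_summable[OF f \<rho>]])
    fix D
    have "(\<Sum>d<D. wblock n f d * \<rho> ^ d) \<le> (\<Sum>d\<le>D. wblock n f d * \<rho> ^ d)"
      by (rule sum_mono2) (use \<rho> in \<open>auto simp: wblock_nonneg\<close>)
    also have "\<dots> \<le> (\<Sum>k\<in>mindex_le n D. ?g k)"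
      using \<rho> by (intro partial_sum_wblock_le) simp
    also have "\<dots> \<le> infsum ?g (mindex n)"
      by (rule finite_sum_le_infsum[OF class_norm_summable[OF f \<rho>] finite_mindex_le])
        (use \<rho> in \<open>auto simp: mindex_le_def class_norm_nonneg\<close>)
    finally show "(\<Sum>d<D. wblock n f d * \<rho> ^ d) \<le> infsum ?g (mindex n)" .
  qed
  then show ?thesis by (simp add: normF_bullet_eq_suminf[OF f \<rho>] normF_circ_eq_class_norm)
qed

lemma normF_bullet_mono:
  assumes f: "f \<in> Fspace n r" and \<rho>: "0 < \<rho>" "\<rho> \<le> \<rho>'" "ereal \<rho>' < r"
  shows "normF_bullet n f \<rho> \<le> normF_bullet n f \<rho>'"
proof -
  have \<rho>r: "ereal \<rho> < r" using \<rho> by (meson ereal_less_eq(3) le_less_trans)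
  have \<rho>'0: "0 < \<rho>'" using \<rho> by simp
  show ?thesis
    unfolding normF_bullet_eq_suminf[OF f \<rho>(1) \<rho>r] normF_bullet_eq_suminf[OF f \<rho>'0 \<rho>(3)]
    using Fspace_summable[OF f \<rho>(1) \<rho>r] Fspace_summable[OF f \<rho>'0 \<rho>(3)] \<rho>
    by (intro suminf_le) (auto intro!: mult_left_mono power_mono simp: wblock_nonneg)
qed

lemma normF_bullet_diff:
  assumes f: "f \<in> Fspace n r" and g: "g \<in> Fspace n r" and \<rho>: "0 < \<rho>" "ereal \<rho> < r"
  shows "normF_bullet n (\<lambda>w. f w - g w) \<rho> \<le> normF_bullet n f \<rho> + normF_bullet n g \<rho>"
proof -
  have fg: "(\<lambda>w. f w - g w) \<in> Fspace n r" using Fspace_diff[OF f g, of 1] by simp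
  have "(\<Sum>d. wblock n (\<lambda>w. f w - g w) d * \<rho> ^ d) \<le> (\<Sum>d. wblock n f d * \<rho> ^ d + wblock n g d * \<rho> ^ d)"
    using Fspace_summable[OF fg \<rho>] summable_add[OF Fspace_summable[OF f \<rho>] Fspace_summable[OF g \<rho>]]
      wblock_diff \<rho>
    by (intro suminf_le) (auto simp: distrib_right[symmetric] intro!: mult_right_mono)
  also have "\<dots> = (\<Sum>d. wblock n f d * \<rho> ^ d) + (\<Sum>d. wblock n g d * \<rho> ^ d)"
    by (rule suminf_add[symmetric, OF Fspace_summable[OF f \<rho>] Fspace_summable[OF g \<rho>]])
  finally show ?thesis
    by (simp add: normF_bullet_eq_suminf[OF fg \<rho>] normF_bullet_eq_suminf[OF f \<rho>] normF_bullet_eq_suminf[OF g \<rho>])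
qed

lemma class_norm_le_normF_bullet:
  assumes f: "f \<in> Fspace n r" and \<rho>: "0 < \<rho>" "ereal \<rho> < r"
  shows "class_norm n f k * \<rho> ^ mabs n k \<le> normF_bullet n f \<rho>"
proof -
  have "class_norm n f k * \<rho> ^ mabs n k \<le> wblock n f (mabs n k) * \<rho> ^ mabs n k"
    using \<rho> class_norm_le_wblock by (intro mult_right_mono) auto
  also have "\<dots> \<le> (\<Sum>d. wblock n f d * \<rho> ^ d)"
    using sum_le_suminf[OF Fspace_summable[OF f \<rho>], of "{mabs n k}"] \<rho> by (simp add: wblock_nonneg)
  finally show ?thesis by (simp add: normF_bullet_eq_suminf[OF f \<rho>])
qed

section \<open>\<open>\<pi>\<close> is a quotient map of normed spaces\<close>

lemma piq_Oq:
  assumes q: "q \<noteq> 0" and f: "f \<in> Fspace n r"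
  shows "piq n q f \<in> Oq n q r"
  unfolding Oq_def
proof (intro CollectI conjI allI impI)
  fix \<rho> :: real assume \<rho>: "0 < \<rho> \<and> ereal \<rho> < r"
  show "(\<lambda>k. cmod (piq n q f k) * Bterm n q k * \<rho> ^ mabs n k) summable_on mindex n"
    by (rule summable_on_comparison_test[OF class_norm_summable[OF f]])
      (use \<rho> piq_Bterm_le_class_norm[OF q] Bterm_nonneg in \<open>auto intro: mult_right_mono\<close>)
qed (simp add: piq_outside_mindex)

lemma normB_piq_le_normF_circ:
  assumes q: "q \<noteq> 0" and f: "f \<in> Fspace n r" and \<rho>: "0 < \<rho>" "ereal \<rho> < r"
  shows "normB n q (piq n q f) \<rho> \<le> normF_circ n f \<rho>"
  unfolding normB_def normF_circ_eq_class_norm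
proof (rule infsum_mono)
  show "(\<lambda>k. cmod (piq n q f k) * Bterm n q k * \<rho> ^ mabs n k) summable_on mindex n"
    using piq_Oq[OF q f] \<rho> by (auto simp: Oq_def)
qed (use class_norm_summable[OF f \<rho>] \<rho> piq_Bterm_le_class_norm[OF q] in \<open>auto intro: mult_right_mono\<close>)

lemma Oq_vanishes: "a \<in> Oq n q r \<Longrightarrow> k \<notin> mindex n \<Longrightarrow> a k = 0"
  by (simp add: Oq_def)

lemma normF_circ_qlift:
  assumes "q \<noteq> 0"
  shows "normF_circ n (qlift n q a) \<rho> = normB n q a \<rho>"
  unfolding normF_circ_eq_class_norm normB_def
  by (intro infsum_cong) (simp add: class_norm_qlift[OF assms])

lemma qlift_Fspace:
  assumes q: "q \<noteq> 0" and a: "a \<in> Oq n q r"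
  shows "qlift n q a \<in> Fspace n r"
proof (rule Fspace_by_summable)
  fix \<rho> :: real assume \<rho>: "0 < \<rho>" "ereal \<rho> < r"
  have "(\<lambda>k. class_norm n (qlift n q a) k * \<rho> ^ mabs n k) summable_on mindex n
      \<longleftrightarrow> (\<lambda>k. cmod (a k) * Bterm n q k * \<rho> ^ mabs n k) summable_on mindex n"
    by (intro summable_on_cong) (simp add: class_norm_qlift[OF q])
  then have summable: "(\<lambda>k. class_norm n (qlift n q a) k * \<rho> ^ mabs n k) summable_on mindex n"
    using a \<rho> by (simp add: Oq_def)
  show "summable (\<lambda>d. wblock n (qlift n q a) d * \<rho> ^ d)"
  proof (rule bounded_imp_summable)
    fix D
    have "(\<Sum>d\<le>D. wblock n (qlift n q a) d * \<rho> ^ d)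
        \<le> (\<Sum>k\<in>mindex_le n D. class_norm n (qlift n q a) k * \<rho> ^ mabs n k)"
      using \<rho> by (intro partial_sum_wblock_le) simp
    also have "\<dots> \<le> (\<Sum>\<^sub>\<infinity>k\<in>mindex n. class_norm n (qlift n q a) k * \<rho> ^ mabs n k)"
      by (rule finite_sum_le_infsum[OF summable finite_mindex_le])
        (use \<rho> in \<open>auto simp: mindex_le_def class_norm_nonneg\<close>)
    finally show "(\<Sum>d\<le>D. wblock n (qlift n q a) d * \<rho> ^ d)
        \<le> (\<Sum>\<^sub>\<infinity>k\<in>mindex n. class_norm n (qlift n q a) k * \<rho> ^ mabs n k)" .
  qed (use \<rho> in \<open>simp add: wblock_nonneg\<close>)
qed (simp add: qlift_def)

lemma cont_FO_piq:
  assumes "q \<noteq> 0"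
  shows "cont_FO n q r (piq n q)"
  unfolding cont_FO_def
proof (intro allI impI)
  fix \<rho> :: real assume \<rho>: "0 < \<rho> \<and> ereal \<rho> < r"
  then obtain \<rho>' B where "0 < \<rho>'" "ereal \<rho>' < r"
    and "\<And>f. f \<in> Fspace n r \<Longrightarrow> normF_circ n f \<rho> \<le> B * normF_bullet n f \<rho>'"
    using normF_circ_le_bullet[of \<rho> r n] by blast
  then show "\<exists>\<rho>' C. 0 < \<rho>' \<and> ereal \<rho>' < r \<and> (\<forall>f\<in>Fspace n r. normB n q (piq n q f) \<rho> \<le> C * normF_bullet n f \<rho>')"
    using normB_piq_le_normF_circ[OF assms] \<rho> by (meson order.trans)
qed

lemma piq_qlift_piq: "q \<noteq> 0 \<Longrightarrow> piq n q (qlift n q (piq n q f)) = piq n q f"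
  by (rule piq_qlift) (simp_all add: piq_outside_mindex)

lemma piq_image:
  assumes "q \<noteq> 0"
  shows "piq n q ` Fspace n r = Oq n q r"
proof
  show "piq n q ` Fspace n r \<subseteq> Oq n q r" using piq_Oq[OF assms] by blast
  show "Oq n q r \<subseteq> piq n q ` Fspace n r"
  proof
    fix a assume a: "a \<in> Oq n q r"
    then have "a = piq n q (qlift n q a)" using piq_qlift[OF assms] Oq_vanishes by metis
    then show "a \<in> piq n q ` Fspace n r" using qlift_Fspace[OF assms a] by blast
  qed
qed

lemma normB_eq_quotient_norm:
  assumes q: "q \<noteq> 0" and \<rho>: "0 < \<rho>" "ereal \<rho> < r" and a: "a \<in> Oq n q r"
  shows "normB n q a \<rho> = Inf {normF_circ n f \<rho> | f. f \<in> Fspace n r \<and> piq n q f = a}"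
proof (rule cInf_eq_minimum[symmetric])
  have "piq n q (qlift n q a) = a" using piq_qlift[OF q] Oq_vanishes[OF a] by blast
  then show "normB n q a \<rho> \<in> {normF_circ n f \<rho> | f. f \<in> Fspace n r \<and> piq n q f = a}"
    using qlift_Fspace[OF q a] normF_circ_qlift[OF q, of n a \<rho>] by force
next
  fix x assume "x \<in> {normF_circ n f \<rho> | f. f \<in> Fspace n r \<and> piq n q f = a}"
  then show "normB n q a \<rho> \<le> x" using normB_piq_le_normF_circ[OF q _ \<rho>] by blast
qed

section \<open>The kernel of \<open>\<pi>\<close>\<close>

lemma piq_zero: "piq n q (\<lambda>_. 0) = (\<lambda>_. 0)"
  by (simp add: piq_def)

lemma ker_piq_two_sided_ideal: "two_sided_ideal n r {f \<in> Fspace n r. piq n q f = (\<lambda>_. 0)}"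
  unfolding two_sided_ideal_def
  using zero_Fspace Fspace_add Fspace_smult Fspace_Fmult
  by (auto simp: piq_zero piq_add piq_smult piq_Fmult Oqmult_def)

lemma ideal_gen_qcomm_subset_ker:
  assumes "q \<noteq> 0"
  shows "ideal_gen n r {qcomm q i j | i j. 1 \<le> i \<and> i < j \<and> j \<le> n} \<subseteq> {f \<in> Fspace n r. piq n q f = (\<lambda>_. 0)}"
proof -
  have "qcomm q i j \<in> Fspace n r" if "1 \<le> i" "i < j" "j \<le> n" for i j
    unfolding qcomm_eq_wbasis using that by (intro Fspace_diff wbasis_Fspace) auto
  then have "{qcomm q i j | i j. 1 \<le> i \<and> i < j \<and> j \<le> n} \<subseteq> {f \<in> Fspace n r. piq n q f = (\<lambda>_. 0)}"
    using piq_qcomm[OF _ _ _ assms] by blast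
  then show ?thesis
    using ker_piq_two_sided_ideal unfolding ideal_gen_def by blast
qed

definition trunc :: "nat \<Rightarrow> (nat list \<Rightarrow> complex) \<Rightarrow> nat list \<Rightarrow> complex" where
  "trunc N f = (\<lambda>w. if length w \<le> N then f w else 0)"

lemma trunc_Fspace: "f \<in> Fspace n r \<Longrightarrow> trunc N f \<in> Fspace n r"
  by (rule Fspace_finite_support[of _ _ N]) (auto simp: trunc_def Fspace_vanishes)

lemma sort_fibre_eq_count_class:
  assumes "\<alpha>\<^sub>0 \<in> words n" "length \<alpha>\<^sub>0 \<le> N"
  shows "{\<alpha> \<in> {\<alpha> \<in> words n. length \<alpha> \<le> N}. sort \<alpha> = sort \<alpha>\<^sub>0} = count_class n (pvec \<alpha>\<^sub>0)"
proof -
  have "sort \<alpha> = sort \<alpha>\<^sub>0 \<longleftrightarrow> mset \<alpha> = mset \<alpha>\<^sub>0" for \<alpha>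
    by (metis mset_sort sorted_list_of_multiset_mset)
  then show ?thesis
    using assms by (auto simp: count_class_def pvec_eq_iff_mset_eq dest: mset_eq_length)
qed

text \<open>The reduced forms \<open>q^(-inv \<alpha>) sort \<alpha>\<close> cancel: on each fibre of the letter count the
  coefficients of a kernel element are annihilated by \<open>\<pi>\<close>.\<close>

lemma trunc_ker_eq_sum_reductions:
  assumes f: "f \<in> Fspace n r" and ker: "piq n q f = (\<lambda>_. 0)"
  shows "trunc N f = (\<lambda>w. \<Sum>\<alpha>\<in>{\<alpha> \<in> words n. length \<alpha> \<le> N}.
                              f \<alpha> * (wbasis \<alpha> w - qweight q \<alpha> * wbasis (sort \<alpha>) w))"
proof
  fix w
  let ?W = "{\<alpha> \<in> words n. length \<alpha> \<le> N}"
  have "(\<Sum>\<alpha>\<in>?W. f \<alpha> * wbasis \<alpha> w) = (if w \<in> ?W then f w else 0)"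
    by (simp add: wbasis_def if_distrib sum.delta' finite_words_length_le cong: if_cong)
  also have "\<dots> = trunc N f w"
    using f by (auto simp: trunc_def Fspace_vanishes)
  finally have unreduced: "(\<Sum>\<alpha>\<in>?W. f \<alpha> * wbasis \<alpha> w) = trunc N f w" .
  have "(\<Sum>\<alpha>\<in>?W. f \<alpha> * (qweight q \<alpha> * wbasis (sort \<alpha>) w)) = (\<Sum>\<alpha>\<in>{\<alpha> \<in> ?W. sort \<alpha> = w}. f \<alpha> * qweight q \<alpha>)"
    by (simp add: wbasis_def sum.inter_filter[symmetric] finite_words_length_le eq_commute if_distrib cong: if_cong)
  also have "\<dots> = 0"
  proof (cases "\<exists>\<alpha>\<^sub>0\<in>?W. sort \<alpha>\<^sub>0 = w")
    case True
    then obtain \<alpha>\<^sub>0 where "\<alpha>\<^sub>0 \<in> ?W" "w = sort \<alpha>\<^sub>0" by auto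
    then have "{\<alpha> \<in> ?W. sort \<alpha> = w} = count_class n (pvec \<alpha>\<^sub>0)"
      using sort_fibre_eq_count_class by blast
    then show ?thesis
      using fun_cong[OF ker, of "pvec \<alpha>\<^sub>0"] by (simp add: piq_def)
  next
    case False
    then have "{\<alpha> \<in> ?W. sort \<alpha> = w} = {}" by blast
    then show ?thesis by (simp only: sum.empty)
  qed
  finally show "trunc N f w = (\<Sum>\<alpha>\<in>?W. f \<alpha> * (wbasis \<alpha> w - qweight q \<alpha> * wbasis (sort \<alpha>) w))"
    using unreduced by (simp add: right_diff_distrib sum_subtractf)
qed

lemma (in qcomm_ideal) trunc_ker_mem:
  assumes "f \<in> Fspace n r" "piq n q f = (\<lambda>_. 0)"
  shows "trunc N f \<in> I"
  unfolding trunc_ker_eq_sum_reductions[OF assms]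
  by (intro sum_mem finite_words_length_le smult_mem sort_mem) simp

lemma trunc_approx:
  assumes f: "f \<in> Fspace n r" and \<rho>: "0 < \<rho>" "ereal \<rho> < r" and "\<epsilon> > 0"
  obtains N where "normF_bullet n (\<lambda>w. f w - trunc N f w) \<rho> < \<epsilon>"
proof -
  let ?a = "\<lambda>d. wblock n f d * \<rho> ^ d"
  have summable: "summable ?a" by (rule Fspace_summable[OF f \<rho>])
  obtain N where N: "\<And>m. m \<ge> N \<Longrightarrow> norm (\<Sum>i. ?a (i + m)) < \<epsilon>"
    using suminf_exist_split[OF \<open>\<epsilon> > 0\<close> summable] by blast
  have tail: "wblock n (\<lambda>w. f w - trunc N f w) d * \<rho> ^ d = (if d \<le> N then 0 else ?a d)" for d
    unfolding wblock_def trunc_def by (auto intro!: arg_cong[where f = sqrt] sum.neutral)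
  have "summable (\<lambda>d. if d \<le> N then 0 else ?a d)"
    by (rule summable_comparison_test'[OF summable]) (use \<rho> in \<open>auto simp: wblock_nonneg\<close>)
  have "(\<lambda>w. f w - trunc N f w) \<in> Fspace n r"
    using Fspace_diff[OF f trunc_Fspace[OF f], of 1] by simp
  then have "normF_bullet n (\<lambda>w. f w - trunc N f w) \<rho> = (\<Sum>d. if d \<le> N then 0 else ?a d)"
    by (simp add: normF_bullet_eq_suminf[OF _ \<rho>] tail)
  also have "\<dots> = (\<Sum>i. (if i + Suc N \<le> N then 0 else ?a (i + Suc N))) + (\<Sum>i<Suc N. if i \<le> N then 0 else ?a i)"
    by (rule suminf_split_initial_segment) fact
  also have "\<dots> = (\<Sum>i. ?a (i + Suc N))" by simp
  also have "\<dots> < \<epsilon>" using N[of "Suc N"] by simp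
  finally show ?thesis by (rule that)
qed

lemma ker_piq_subset_Fclosure:
  assumes "q \<noteq> 0"
  shows "{f \<in> Fspace n r. piq n q f = (\<lambda>_. 0)}
           \<subseteq> Fclosure n r (ideal_gen n r {qcomm q i j | i j. 1 \<le> i \<and> i < j \<and> j \<le> n})"
proof (intro subsetI CollectI)
  fix f assume "f \<in> {f \<in> Fspace n r. piq n q f = (\<lambda>_. 0)}"
  then have f: "f \<in> Fspace n r" "piq n q f = (\<lambda>_. 0)" by auto
  have "trunc N f \<in> ideal_gen n r {qcomm q i j | i j. 1 \<le> i \<and> i < j \<and> j \<le> n}" for N
  proof -
    have "trunc N f \<in> I" if "two_sided_ideal n r I" "{qcomm q i j | i j. 1 \<le> i \<and> i < j \<and> j \<le> n} \<subseteq> I" for I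
    proof -
      interpret qcomm_ideal n r q I
        using that assms by unfold_locales blast+
      show ?thesis by (rule trunc_ker_mem[OF f])
    qed
    then show ?thesis using trunc_Fspace[OF f(1)] by (auto simp: ideal_gen_def)
  qed
  then show "f \<in> Fclosure n r (ideal_gen n r {qcomm q i j | i j. 1 \<le> i \<and> i < j \<and> j \<le> n})"
    using f(1) trunc_approx[OF f(1)] unfolding Fclosure_def by blast
qed

lemma piq_coeff_le_normF_bullet:
  assumes q: "q \<noteq> 0" and h: "h \<in> Fspace n r" and \<rho>: "0 < \<rho>" "ereal \<rho> < r" and k: "k \<in> mindex n"
  shows "cmod (piq n q h k) * \<rho> ^ mabs n k \<le> sqrt (qweight_sqnorm n q k) * normF_bullet n h \<rho>"
proof -
  have "cmod (piq n q h k) * \<rho> ^ mabs n k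
      = sqrt (qweight_sqnorm n q k) * (cmod (piq n q h k) * Bterm n q k * \<rho> ^ mabs n k)"
    using Bterm_eq_qweight_sqnorm[OF q k] qweight_sqnorm_pos[OF q k] by simp
  also have "\<dots> \<le> sqrt (qweight_sqnorm n q k) * (class_norm n h k * \<rho> ^ mabs n k)"
    using piq_Bterm_le_class_norm[OF q] \<rho>
    by (intro mult_left_mono mult_right_mono) (auto simp: qweight_sqnorm_nonneg)
  also have "\<dots> \<le> sqrt (qweight_sqnorm n q k) * normF_bullet n h \<rho>"
    by (intro mult_left_mono class_norm_le_normF_bullet[OF h \<rho>]) (simp add: qweight_sqnorm_nonneg)
  finally show ?thesis .
qed

lemma Fclosure_subset_ker_piq:
  assumes q: "q \<noteq> 0" and r: "0 < r"
  shows "Fclosure n r (ideal_gen n r {qcomm q i j | i j. 1 \<le> i \<and> i < j \<and> j \<le> n})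
           \<subseteq> {f \<in> Fspace n r. piq n q f = (\<lambda>_. 0)}"
proof
  fix f assume f: "f \<in> Fclosure n r (ideal_gen n r {qcomm q i j | i j. 1 \<le> i \<and> i < j \<and> j \<le> n})"
  then have fF: "f \<in> Fspace n r" by (simp add: Fclosure_def)
  obtain \<rho> where \<rho>: "0 < \<rho>" "ereal \<rho> < r"
    using ereal_dense2[OF r] by (metis ereal_less(2))
  have approx: "cmod (piq n q f k) * \<rho> ^ mabs n k \<le> sqrt (qweight_sqnorm n q k) * \<epsilon>"
    if k: "k \<in> mindex n" and "\<epsilon> > 0" for k \<epsilon>
  proof -
    obtain g where g: "g \<in> ideal_gen n r {qcomm q i j | i j. 1 \<le> i \<and> i < j \<and> j \<le> n}"
      and close: "normF_bullet n (\<lambda>w. f w - g w) \<rho> < \<epsilon>"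
      using f \<rho> \<open>\<epsilon> > 0\<close> unfolding Fclosure_def by blast
    have gker: "g \<in> Fspace n r" "piq n q g = (\<lambda>_. 0)"
      using g ideal_gen_qcomm_subset_ker[OF q] by auto
    have "piq n q (\<lambda>w. f w - 1 * g w) = piq n q f"
      unfolding piq_diff gker(2) by simp
    then have "cmod (piq n q f k) * \<rho> ^ mabs n k \<le> sqrt (qweight_sqnorm n q k) * normF_bullet n (\<lambda>w. f w - g w) \<rho>"
      using piq_coeff_le_normF_bullet[OF q Fspace_diff[OF fF gker(1)] \<rho> k, of 1] by simp
    also have "\<dots> \<le> sqrt (qweight_sqnorm n q k) * \<epsilon>"
      using close by (intro mult_left_mono) (auto simp: qweight_sqnorm_nonneg)
    finally show ?thesis .
  qed
  have le0: "cmod (piq n q f k) * \<rho> ^ mabs n k \<le> 0" if k: "k \<in> mindex n" for k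
  proof (rule field_le_epsilon)
    fix e :: real assume "0 < e"
    have c: "sqrt (qweight_sqnorm n q k) > 0" using qweight_sqnorm_pos[OF q k] by simp
    then show "cmod (piq n q f k) * \<rho> ^ mabs n k \<le> 0 + e"
      using approx[OF k, of "e / sqrt (qweight_sqnorm n q k)"] \<open>0 < e\<close> by simp
  qed
  have "piq n q f k = 0" for k
  proof (cases "k \<in> mindex n")
    case True
    have "0 < \<rho> ^ mabs n k" using \<rho>(1) by simp
    then show ?thesis using le0[OF True] by (simp add: mult_le_0_iff)
  qed (simp add: piq_outside_mindex)
  then show "f \<in> {f \<in> Fspace n r. piq n q f = (\<lambda>_. 0)}" using fF by auto
qed

lemma ker_piq_eq_Fclosure:
  assumes "q \<noteq> 0" "0 < r"
  shows "{f \<in> Fspace n r. piq n q f = (\<lambda>_. 0)}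
           = Fclosure n r (ideal_gen n r {qcomm q i j | i j. 1 \<le> i \<and> i < j \<and> j \<le> n})"
  using ker_piq_subset_Fclosure[OF assms(1)] Fclosure_subset_ker_piq[OF assms] by (rule subset_antisym)

definition ker_proj :: "nat \<Rightarrow> complex \<Rightarrow> (nat list \<Rightarrow> complex) \<Rightarrow> nat list \<Rightarrow> complex" where
  "ker_proj n q f = (\<lambda>\<alpha>. f \<alpha> - qlift n q (piq n q f) \<alpha>)"

lemma ker_proj_Fspace:
  assumes "q \<noteq> 0" "f \<in> Fspace n r"
  shows "ker_proj n q f \<in> Fspace n r"
  unfolding ker_proj_def
  using Fspace_diff[OF assms(2) qlift_Fspace[OF assms(1) piq_Oq[OF assms]], of 1] by simp

lemma piq_ker_proj: "q \<noteq> 0 \<Longrightarrow> piq n q (ker_proj n q f) = (\<lambda>_. 0)"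
  using piq_diff[of n q f 1 "qlift n q (piq n q f)"] by (simp add: ker_proj_def piq_qlift_piq)

lemma ker_proj_ker: "piq n q f = (\<lambda>_. 0) \<Longrightarrow> ker_proj n q f = f"
  by (simp add: ker_proj_def qlift_zero)

lemma lin_on_ker_proj: "lin_on S (ker_proj n q)"
  unfolding lin_on_def ker_proj_def by (auto simp: piq_add piq_smult qlift_add qlift_smult algebra_simps)

lemma cont_FF_ker_proj:
  assumes q: "q \<noteq> 0"
  shows "cont_FF n r (ker_proj n q)"
  unfolding cont_FF_def
proof (intro allI impI)
  fix \<rho> :: real assume \<rho>: "0 < \<rho> \<and> ereal \<rho> < r"
  then obtain \<rho>' B where \<rho>': "0 < \<rho>'" "\<rho> < \<rho>'" "ereal \<rho>' < r"
    and B: "\<And>f. f \<in> Fspace n r \<Longrightarrow> normF_circ n f \<rho> \<le> B * normF_bullet n f \<rho>'"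
    using normF_circ_le_bullet[of \<rho> r n] by blast
  have "normF_bullet n (ker_proj n q f) \<rho> \<le> (1 + B) * normF_bullet n f \<rho>'" if f: "f \<in> Fspace n r" for f
  proof -
    have lift: "qlift n q (piq n q f) \<in> Fspace n r" by (rule qlift_Fspace[OF q piq_Oq[OF q f]])
    have "normF_bullet n (ker_proj n q f) \<rho> \<le> normF_bullet n f \<rho> + normF_bullet n (qlift n q (piq n q f)) \<rho>"
      unfolding ker_proj_def using normF_bullet_diff[OF f lift] \<rho> by blast
    also have "normF_bullet n (qlift n q (piq n q f)) \<rho> \<le> normF_circ n (qlift n q (piq n q f)) \<rho>"
      using normF_bullet_le_circ[OF lift] \<rho> by blast
    also have "\<dots> = normB n q (piq n q f) \<rho>" by (rule normF_circ_qlift[OF q])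
    also have "\<dots> \<le> normF_circ n f \<rho>" using normB_piq_le_normF_circ[OF q f] \<rho> by blast
    also have "\<dots> \<le> B * normF_bullet n f \<rho>'" by (rule B[OF f])
    also have "normF_bullet n f \<rho> \<le> normF_bullet n f \<rho>'"
      using normF_bullet_mono[OF f _ _ \<rho>'(3)] \<rho> \<rho>'(2) by simp
    finally show ?thesis by (simp add: algebra_simps)
  qed
  then show "\<exists>\<rho>' C. 0 < \<rho>' \<and> ereal \<rho>' < r \<and> (\<forall>f\<in>Fspace n r. normF_bullet n (ker_proj n q f) \<rho> \<le> C * normF_bullet n f \<rho>')"
    using \<rho>' by blast
qed

lemma ker_piq_complemented:
  assumes "q \<noteq> 0"
  shows "\<exists>P. (\<forall>f\<in>Fspace n r. P f \<in> Fspace n r) \<and> lin_on (Fspace n r) P \<and> cont_FF n r P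
           \<and> (\<forall>f\<in>Fspace n r. P (P f) = P f)
           \<and> P ` Fspace n r = {f \<in> Fspace n r. piq n q f = (\<lambda>_. 0)}"
proof (intro exI[of _ "ker_proj n q"] conjI ballI)
  show "ker_proj n q ` Fspace n r = {f \<in> Fspace n r. piq n q f = (\<lambda>_. 0)}"
    using ker_proj_Fspace[OF assms] piq_ker_proj[OF assms] ker_proj_ker by (force simp: image_iff)
qed (simp_all add: assms ker_proj_Fspace lin_on_ker_proj cont_FF_ker_proj ker_proj_ker piq_ker_proj)

theorem theorem7p10:
  fixes q :: complex and n :: nat and r :: ereal
  assumes "q \<noteq> 0" and "0 < r"
  shows "\<exists>\<pi>. (\<forall>f\<in>Fspace n r. \<pi> f \<in> Oq n q r)
     \<and> lin_on (Fspace n r) \<pi>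
     \<and> (\<forall>f\<in>Fspace n r. \<forall>g\<in>Fspace n r. \<pi> (Fmult f g) = Oqmult n q (\<pi> f) (\<pi> g))
     \<and> \<pi> Fone = Oone
     \<and> cont_FO n q r \<pi>
     \<and> \<pi> ` Fspace n r = Oq n q r
     \<and> (\<forall>i\<in>{1..n}. \<pi> (zeta i) = xgen i)
     \<and> {f \<in> Fspace n r. \<pi> f = (\<lambda>_. 0)}
          = Fclosure n r (ideal_gen n r {qcomm q i j | i j. 1 \<le> i \<and> i < j \<and> j \<le> n})
     \<and> (\<exists>P. (\<forall>f\<in>Fspace n r. P f \<in> Fspace n r) \<and> lin_on (Fspace n r) P \<and> cont_FF n r P
           \<and> (\<forall>f\<in>Fspace n r. P (P f) = P f)
           \<and> P ` Fspace n r = {f \<in> Fspace n r. \<pi> f = (\<lambda>_. 0)})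
     \<and> (\<forall>\<rho>. 0 < \<rho> \<and> ereal \<rho> < r \<longrightarrow>
          (\<forall>a\<in>Oq n q r. normB n q a \<rho> = Inf {normF_circ n f \<rho> | f. f \<in> Fspace n r \<and> \<pi> f = a}))"
proof (intro exI[of _ "piq n q"] conjI ballI allI impI)
  show "{f \<in> Fspace n r. piq n q f = (\<lambda>_. 0)}
      = Fclosure n r (ideal_gen n r {qcomm q i j | i j. 1 \<le> i \<and> i < j \<and> j \<le> n})"
    by (rule ker_piq_eq_Fclosure[OF assms])
  show "\<exists>P. (\<forall>f\<in>Fspace n r. P f \<in> Fspace n r) \<and> lin_on (Fspace n r) P \<and> cont_FF n r P
           \<and> (\<forall>f\<in>Fspace n r. P (P f) = P f)
           \<and> P ` Fspace n r = {f \<in> Fspace n r. piq n q f = (\<lambda>_. 0)}"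
    by (rule ker_piq_complemented[OF assms(1)])
qed (use assms(1) in \<open>simp_all add: piq_Oq lin_on_piq piq_Fmult piq_Fone cont_FO_piq piq_image
                                     piq_zeta normB_eq_quotient_norm\<close>)

end
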